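(* Let $S$ be finite, $\Gamma$ countable, $X\subset S^\Gamma$ closed, $\mathbb G$ a countable Abelian group and $G:S\to\mathbb G$. Let $\mathbb H$ be the subgroup of $\mathbb G$ generated by $\{\Psi_G(x,y):(x,y)\in\mathfrak T(X)\}$, and suppose that the skew product relation $\mathfrak T(X)_{\Psi_G}$ is topologically transitive on $X\times\mathbb H$. If $p$ is a Borel probability on $X$ which is $\mathfrak T(X)$-nonsingular, $\mathfrak T(X)[\Psi_G]$-invariant and $\mathfrak T(X)[\Psi_G]$-ergodic, then $p$ is site conformal.
   Context: Tail relation: $\mathfrak T(X)=\{(x,y)\in X\times X:\exists F\subset\Gamma\text{ finite},\ x_{\Gamma\setminus F}=y_{\Gamma\setminus F}\}$. For $(x,y)\in\mathfrak T(X)$, $\Psi_G(x,y)=\sum_{j\in\Gamma}(G(y_j)-G(x_j))$ (finite sum); $\mathfrak T(X)[\Psi_G]=\{(x,y)\in\mathfrak T(X):\Psi_G(x,y)=0\}$. The skew product relation is $\mathfrak T(X)_{\Psi_G}=\{((x,t),(y,s))\in(X\times\mathbb H)^2:(x,y)\in\mathfrak T(X),\ t-s=\Psi_G(x,y)\}$; it is topologically transitive on $X\times\mathbb H$ ($\mathbb H$ discrete) if it meets $U\times V$ for all nonempty open $U,V\subset X\times\mathbb H$. Measure notions for a countable Borel equivalence relation $\mathcal R$: nonsingular ($p(A)=0\Rightarrow p(\mathcal R(A))=0$), invariant (nonsingular and preserved by every Borel bijection $\Phi:B\to C$ with graph in $\mathcal R$), ergodic (every $\mathcal R$-saturated Borel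 set has measure $0$ or $1$). $p$ is site conformal if there is $g:S\to\mathbb R$ such that $p$ is $\mathfrak T(X)$-nonsingular and for every Borel bijection $\Phi:B\to C$ with $(x,\Phi(x))\in\mathfrak T(X)$, $\frac{dp\circ\Phi}{dp}(x)=\exp\big(\sum_{j\in\Gamma}(g(\Phi(x)_j)-g(x_j))\big)$ for $p$-a.e. $x\in B$. *)

theory Defs
  imports "HOL-Probability.Probability"
begin

definition conf_top :: "('g \<Rightarrow> 's) topology" where
  "conf_top = product_topology (\<lambda>_. discrete_topology UNIV) UNIV"

definition borel_of :: "'a topology \<Rightarrow> 'a measure" where
  "borel_of T = sigma (topspace T) {U. openin T U}"

definition tail_rel :: "('g \<Rightarrow> 's) set \<Rightarrow> (('g \<Rightarrow> 's) \<times> ('g \<Rightarrow> 's)) set" where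
  "tail_rel X = {(x, y). x \<in> X \<and> y \<in> X \<and> finite {j. x j \<noteq> y j}}"

text \<open>Psi_G(x,y) = sum over j of G(y_j) - G(x_j); only sites where x and y differ contribute.\<close>
definition Psi :: "('s \<Rightarrow> 'a::ab_group_add) \<Rightarrow> ('g \<Rightarrow> 's) \<Rightarrow> ('g \<Rightarrow> 's) \<Rightarrow> 'a" where
  "Psi G x y = (\<Sum>j\<in>{j. x j \<noteq> y j}. G (y j) - G (x j))"

definition tail_rel_Psi :: "('g \<Rightarrow> 's) set \<Rightarrow> ('s \<Rightarrow> 'a::ab_group_add) \<Rightarrow> (('g \<Rightarrow> 's) \<times> ('g \<Rightarrow> 's)) set" where
  "tail_rel_Psi X G = {(x, y) \<in> tail_rel X. Psi G x y = 0}"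

inductive_set subgroup_generated :: "'a::ab_group_add set \<Rightarrow> 'a set" for A where
  gen: "a \<in> A \<Longrightarrow> a \<in> subgroup_generated A"
| zero: "0 \<in> subgroup_generated A"
| add: "a \<in> subgroup_generated A \<Longrightarrow> b \<in> subgroup_generated A \<Longrightarrow> a + b \<in> subgroup_generated A"
| neg: "a \<in> subgroup_generated A \<Longrightarrow> - a \<in> subgroup_generated A"

definition skew_rel :: "('g \<Rightarrow> 's) set \<Rightarrow> ('s \<Rightarrow> 'a::ab_group_add)
    \<Rightarrow> ((('g \<Rightarrow> 's) \<times> 'a) \<times> (('g \<Rightarrow> 's) \<times> 'a)) set" where
  "skew_rel X G = {((x, t), (y, s)). (x, y) \<in> tail_rel X \<and> t - s = Psi G x y}"

definition top_transitive :: "'a topology \<Rightarrow> ('a \<times> 'a) set \<Rightarrow> bool" where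
  "top_transitive T R \<longleftrightarrow>
     (\<forall>U V. openin T U \<longrightarrow> openin T V \<longrightarrow> U \<noteq> {} \<longrightarrow> V \<noteq> {} \<longrightarrow> R \<inter> (U \<times> V) \<noteq> {})"

definition borel_bij :: "'a measure \<Rightarrow> ('a \<Rightarrow> 'a) \<Rightarrow> 'a set \<Rightarrow> 'a set \<Rightarrow> bool" where
  "borel_bij M \<Phi> B C \<longleftrightarrow> B \<in> sets M \<and> C \<in> sets M \<and> bij_betw \<Phi> B C \<and>
     \<Phi> \<in> measurable (restrict_space M B) (restrict_space M C) \<and>
     the_inv_into B \<Phi> \<in> measurable (restrict_space M C) (restrict_space M B)"

definition nonsingular :: "'a measure \<Rightarrow> ('a \<times> 'a) set \<Rightarrow> bool" where
  "nonsingular M R \<longleftrightarrow> (\<forall>A \<in> null_sets M. R `` A \<in> null_sets M)"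

definition invariant :: "'a measure \<Rightarrow> ('a \<times> 'a) set \<Rightarrow> bool" where
  "invariant M R \<longleftrightarrow> nonsingular M R \<and>
     (\<forall>\<Phi> B C. borel_bij M \<Phi> B C \<longrightarrow> (\<forall>x\<in>B. (x, \<Phi> x) \<in> R) \<longrightarrow>
        (\<forall>A \<in> sets M. A \<subseteq> B \<longrightarrow> emeasure M (\<Phi> ` A) = emeasure M A))"

definition ergodic :: "'a measure \<Rightarrow> ('a \<times> 'a) set \<Rightarrow> bool" where
  "ergodic M R \<longleftrightarrow>
     (\<forall>A \<in> sets M. R `` A \<subseteq> A \<longrightarrow> emeasure M A = 0 \<or> emeasure M A = 1)"

text \<open>Site conformality: the Radon-Nikodym derivative d(p o Phi)/dp on B equals
  exp(Psi_g(x, Phi x)) p-a.e.; expressed via the defining property of the density: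
  p(Phi A) = integral over A of exp(Psi_g(x, Phi x)) for all Borel A contained in B.\<close>
definition site_conformal :: "('g \<Rightarrow> 's) set \<Rightarrow> ('g \<Rightarrow> 's) measure \<Rightarrow> bool" where
  "site_conformal X p \<longleftrightarrow> (\<exists>g :: 's \<Rightarrow> real.
     nonsingular p (tail_rel X) \<and>
     (\<forall>\<Phi> B C. borel_bij p \<Phi> B C \<longrightarrow> (\<forall>x\<in>B. (x, \<Phi> x) \<in> tail_rel X) \<longrightarrow>
        (\<forall>A \<in> sets p. A \<subseteq> B \<longrightarrow>
           emeasure p (\<Phi> ` A) = (\<integral>\<^sup>+ x \<in> A. ennreal (exp (Psi g x (\<Phi> x))) \<partial>p))))"

end

theory Submission
  imports Defs
begin

text \<open>
  Call a partial Borel bijection \<open>\<Phi>\<close> an \<open>h\<close>-map (\<open>cocycle_map h\<close>) if its graph lies in the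
  tail relation and \<open>\<Psi>\<^sub>G(x, \<Phi> x) = h\<close> throughout. By invariance, \<open>0\<close>-maps preserve \<open>p\<close>, and by ergodicity any two sets
  of positive measure are linked by a \<open>0\<close>-map defined on a set of positive measure. Conjugating such
  a link by an \<open>h\<close>-map yields another \<open>0\<close>-map, so the Radon-Nikodym derivative of an \<open>h\<close>-map cannot
  exceed \<open>r\<close> on one part of its domain and stay below \<open>r\<close> on another: it is an a.e. constant
  \<open>dilation h\<close>, the same for all \<open>h\<close>-maps. Composition makes \<open>ln (dilation h)\<close> additive on the
  subgroup of values carried by \<open>h\<close>-maps of positive measure; as \<open>\<real>\<close> is divisible it extends to an
  additive \<open>f\<close> on a subgroup containing \<open>G(S)\<close>, and \<open>g = f \<circ> G\<close> is the required potential, since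
  every partial map splits into the countably many level sets of its cocycle.
\<close>

section \<open>The cocycle \<open>Psi\<close>\<close>

lemma Psi_eq_sum:
  assumes "finite F" "{j. x j \<noteq> y j} \<subseteq> F"
  shows "Psi G x y = (\<Sum>j\<in>F. G (y j) - G (x j))"
  unfolding Psi_def by (rule sum.mono_neutral_left) (use assms in auto)

lemma Psi_self [simp]: "Psi G x x = 0"
  by (simp add: Psi_def)

lemma tail_rel_refl: "x \<in> X \<Longrightarrow> (x, x) \<in> tail_rel X"
  by (simp add: tail_rel_def)

lemma tail_rel_sym: "(x, y) \<in> tail_rel X \<Longrightarrow> (y, x) \<in> tail_rel X"
  by (simp add: tail_rel_def eq_commute)

lemma tail_rel_trans:
  assumes "(x, y) \<in> tail_rel X" "(y, z) \<in> tail_rel X"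
  shows "(x, z) \<in> tail_rel X"
proof -
  have "{j. x j \<noteq> z j} \<subseteq> {j. x j \<noteq> y j} \<union> {j. y j \<noteq> z j}" by auto
  then show ?thesis using assms unfolding tail_rel_def by (auto intro: finite_subset)
qed

lemma Psi_trans:
  assumes "(x, y) \<in> tail_rel X" "(y, z) \<in> tail_rel X"
  shows "Psi G x z = Psi G x y + Psi G y z"
proof -
  define F where "F = {j. x j \<noteq> y j} \<union> {j. y j \<noteq> z j}"
  have F: "finite F" using assms unfolding F_def tail_rel_def by auto
  have "Psi G x z = (\<Sum>j\<in>F. G (z j) - G (x j))"
    by (rule Psi_eq_sum[OF F]) (auto simp: F_def)
  moreover have "Psi G x y = (\<Sum>j\<in>F. G (y j) - G (x j))"
    by (rule Psi_eq_sum[OF F]) (auto simp: F_def)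
  moreover have "Psi G y z = (\<Sum>j\<in>F. G (z j) - G (y j))"
    by (rule Psi_eq_sum[OF F]) (auto simp: F_def)
  ultimately show ?thesis by (simp add: sum.distrib[symmetric])
qed

lemma Psi_swap:
  assumes "(x, y) \<in> tail_rel X"
  shows "Psi G y x = - Psi G x y"
  using Psi_trans[OF assms tail_rel_sym[OF assms], of G] by (simp add: eq_neg_iff_add_eq_0 add.commute)

lemma tail_rel_Psi_trans:
  assumes "(x, y) \<in> tail_rel_Psi X G" "(y, z) \<in> tail_rel_Psi X G"
  shows "(x, z) \<in> tail_rel_Psi X G"
  using assms tail_rel_trans[of x y X z] Psi_trans[of x y X z G] by (simp add: tail_rel_Psi_def)

section \<open>Extending homomorphisms into the reals\<close>

definition additive_subgroup :: "'a::ab_group_add set \<Rightarrow> bool" where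
  "additive_subgroup L \<longleftrightarrow> 0 \<in> L \<and> (\<forall>a\<in>L. \<forall>b\<in>L. a + b \<in> L) \<and> (\<forall>a\<in>L. - a \<in> L)"

definition additive_on :: "'a::ab_group_add set \<Rightarrow> ('a \<Rightarrow> real) \<Rightarrow> bool" where
  "additive_on L f \<longleftrightarrow> (\<forall>a\<in>L. \<forall>b\<in>L. f (a + b) = f a + f b)"

definition int_mult :: "int \<Rightarrow> 'a::ab_group_add \<Rightarrow> 'a" where
  "int_mult k a = (if 0 \<le> k then (\<Sum>_<nat k. a) else - (\<Sum>_<nat (- k). a))"

lemma int_mult_0 [simp]: "int_mult 0 a = 0"
  by (simp add: int_mult_def)

lemma int_mult_1 [simp]: "int_mult 1 a = a"
  by (simp add: int_mult_def)

lemma int_mult_plus_1: "int_mult (k + 1) a = int_mult k a + a"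
proof (cases "0 \<le> k")
  case True
  then have "nat (k + 1) = Suc (nat k)" by simp
  then show ?thesis using True by (simp add: int_mult_def)
next
  case False
  then have "nat (- k) = Suc (nat (- (k + 1)))" by simp
  then show ?thesis using False by (simp add: int_mult_def)
qed

lemma int_mult_minus_1: "int_mult (k - 1) a = int_mult k a - a"
  using int_mult_plus_1[of "k - 1" a] by simp

lemma int_mult_add: "int_mult (k + l) a = int_mult k a + int_mult l a"
proof (induction l rule: int_induct[where k = 0])
  case (step1 l)
  have "int_mult (k + (l + 1)) a = int_mult (k + l) a + a"
    using int_mult_plus_1[of "k + l" a] by (simp add: add.assoc)
  then show ?case using step1 by (simp add: int_mult_plus_1 add.assoc)
next
  case (step2 l)
  have "int_mult (k + (l - 1)) a = int_mult (k + l) a - a"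
    using int_mult_minus_1[of "k + l" a] by (simp add: add_diff_eq)
  then show ?case using step2 by (simp add: int_mult_minus_1 add_diff_eq)
qed simp

lemma int_mult_uminus: "int_mult (- k) a = - int_mult k a"
  using int_mult_add[of k "- k" a] by (simp add: eq_neg_iff_add_eq_0 add.commute)

lemma int_mult_diff: "int_mult (k - l) a = int_mult k a - int_mult l a"
  using int_mult_add[of k "- l" a] by (simp add: int_mult_uminus)

lemma int_mult_mult: "int_mult (k * l) a = int_mult k (int_mult l a)"
proof (induction k rule: int_induct[where k = 0])
  case (step1 k)
  have "int_mult ((k + 1) * l) a = int_mult (k * l) a + int_mult l a"
    by (simp add: distrib_right int_mult_add)
  then show ?case using step1 by (simp add: int_mult_plus_1)
next
  case (step2 k)
  have "int_mult ((k - 1) * l) a = int_mult (k * l) a - int_mult l a"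
    by (simp add: left_diff_distrib int_mult_diff)
  then show ?case using step2 by (simp add: int_mult_minus_1)
qed simp

context
  fixes L :: "'a::ab_group_add set"
  assumes L: "additive_subgroup L"
begin

lemma additive_subgroup_diff: "a \<in> L \<Longrightarrow> b \<in> L \<Longrightarrow> a - b \<in> L"
  using L unfolding additive_subgroup_def by (metis diff_conv_add_uminus)

lemma additive_subgroup_int_mult: "a \<in> L \<Longrightarrow> int_mult k a \<in> L"
proof (induction k rule: int_induct[where k = 0])
  case (step1 k)
  then show ?case using L by (simp add: int_mult_plus_1 additive_subgroup_def)
next
  case (step2 k)
  then show ?case by (simp add: int_mult_minus_1 additive_subgroup_diff)
qed (use L in \<open>simp add: additive_subgroup_def\<close>)

end

context
  fixes L :: "'a::ab_group_add set" and f :: "'a \<Rightarrow> real"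
  assumes L: "additive_subgroup L" and f: "additive_on L f"
begin

lemma additive_on_0: "f 0 = 0"
  using L f unfolding additive_subgroup_def additive_on_def by (metis add.right_neutral add_cancel_right_right)

lemma additive_on_add: "a \<in> L \<Longrightarrow> b \<in> L \<Longrightarrow> f (a + b) = f a + f b"
  using f unfolding additive_on_def by blast

lemma additive_on_diff: "a \<in> L \<Longrightarrow> b \<in> L \<Longrightarrow> f (a - b) = f a - f b"
  using additive_on_add[of "a - b" b] additive_subgroup_diff[OF L, of a b] by simp

lemma additive_on_int_mult: "a \<in> L \<Longrightarrow> f (int_mult k a) = of_int k * f a"
proof (induction k rule: int_induct[where k = 0])
  case (step1 k)
  then show ?case
    by (simp add: int_mult_plus_1 additive_on_add additive_subgroup_int_mult[OF L] distrib_right)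
next
  case (step2 k)
  then show ?case
    by (simp add: int_mult_minus_1 additive_on_diff additive_subgroup_int_mult[OF L] left_diff_distrib)
qed (simp add: additive_on_0)

lemma additive_on_sum:
  "finite F \<Longrightarrow> (\<And>j. j \<in> F \<Longrightarrow> u j \<in> L) \<Longrightarrow> (\<Sum>j\<in>F. u j) \<in> L \<and> f (\<Sum>j\<in>F. u j) = (\<Sum>j\<in>F. f (u j))"
proof (induction F rule: finite_induct)
  case (insert j F)
  then show ?case using L by (simp add: additive_on_add additive_subgroup_def)
qed (use L in \<open>simp add: additive_on_0 additive_subgroup_def\<close>)

end

lemma additive_on_int_mult_slope:
  assumes L: "additive_subgroup L" and f: "additive_on L f"
  obtains c where "\<And>k. int_mult k a \<in> L \<Longrightarrow> f (int_mult k a) = of_int k * c"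
proof (cases "\<exists>m. m \<noteq> 0 \<and> int_mult m a \<in> L")
  case True
  then obtain m where m: "m \<noteq> 0" "int_mult m a \<in> L" by blast
  have "f (int_mult k a) = of_int k * (f (int_mult m a) / of_int m)" if k: "int_mult k a \<in> L" for k
  proof -
    have "of_int m * f (int_mult k a) = f (int_mult m (int_mult k a))"
      using k by (simp add: additive_on_int_mult[OF L f])
    also have "\<dots> = f (int_mult k (int_mult m a))"
      by (simp add: int_mult_mult[symmetric] mult.commute)
    also have "\<dots> = of_int k * f (int_mult m a)"
      using m(2) by (simp add: additive_on_int_mult[OF L f])
    finally show ?thesis using m(1) by (simp add: field_simps)
  qed
  then show ?thesis using that by blast
next
  case False
  have "f (int_mult k a) = of_int k * 0" if "int_mult k a \<in> L" for k
    using False that additive_on_0[OF L f] by (cases "k = 0") auto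
  then show ?thesis by (rule that)
qed

lemma additive_subgroup_add_int_mult:
  assumes L: "additive_subgroup L"
  shows "additive_subgroup {l + int_mult k a | l k. l \<in> L}"
  unfolding additive_subgroup_def
proof (intro conjI ballI)
  show "0 \<in> {l + int_mult k a | l k. l \<in> L}"
    using L by (auto simp: additive_subgroup_def intro!: exI[of _ 0])
next
  fix x y assume "x \<in> {l + int_mult k a | l k. l \<in> L}" "y \<in> {l + int_mult k a | l k. l \<in> L}"
  then obtain l1 k1 l2 k2 where "x = l1 + int_mult k1 a" "y = l2 + int_mult k2 a" "l1 \<in> L" "l2 \<in> L"
    by blast
  then have "x + y = (l1 + l2) + int_mult (k1 + k2) a" "l1 + l2 \<in> L"
    using L by (simp_all add: int_mult_add algebra_simps additive_subgroup_def)
  then show "x + y \<in> {l + int_mult k a | l k. l \<in> L}" by blast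
next
  fix x assume "x \<in> {l + int_mult k a | l k. l \<in> L}"
  then obtain l k where "x = l + int_mult k a" "l \<in> L" by blast
  then have "- x = - l + int_mult (- k) a" "- l \<in> L"
    using L by (simp_all add: int_mult_uminus additive_subgroup_def)
  then show "- x \<in> {l + int_mult k a | l k. l \<in> L}" by blast
qed

lemma additive_on_add_int_mult_well_defined:
  assumes L: "additive_subgroup L" and f: "additive_on L f"
    and c: "\<forall>k. int_mult k a \<in> L \<longrightarrow> f (int_mult k a) = of_int k * c"
    and "l \<in> L" "l' \<in> L" "l + int_mult k a = l' + int_mult k' a"
  shows "f l + of_int k * c = f l' + of_int k' * c"
proof -
  have "l' - l = int_mult k a - int_mult k' a"
    using assms(6) by (simp add: algebra_simps)
  then have "int_mult (k - k') a = l' - l"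
    by (simp add: int_mult_diff)
  then have "f (l' - l) = of_int (k - k') * c"
    using c[rule_format, of "k - k'"] additive_subgroup_diff[OF L assms(5,4)] by simp
  then show ?thesis using additive_on_diff[OF L f assms(5,4)] by (simp add: algebra_simps)
qed

lemma additive_on_extend_one:
  fixes L :: "'a::ab_group_add set"
  assumes L: "additive_subgroup L" and f: "additive_on L f"
  shows "\<exists>L' f'. additive_subgroup L' \<and> L \<subseteq> L' \<and> a \<in> L' \<and> additive_on L' f' \<and> (\<forall>x\<in>L. f' x = f x)"
proof -
  obtain c where c: "\<forall>k. int_mult k a \<in> L \<longrightarrow> f (int_mult k a) = of_int k * c"
    using additive_on_int_mult_slope[OF L f] by metis
  define L' where "L' = {l + int_mult k a | l k. l \<in> L}"
  define f' where "f' z = (SOME v. \<exists>l k. l \<in> L \<and> z = l + int_mult k a \<and> v = f l + of_int k * c)" for z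
  have f': "f' (l + int_mult k a) = f l + of_int k * c" if "l \<in> L" for l k
    unfolding f'_def
  proof (rule someI2)
    show "\<exists>l' k'. l' \<in> L \<and> l + int_mult k a = l' + int_mult k' a \<and> f l + of_int k * c = f l' + of_int k' * c"
      using that by blast
  next
    fix v assume "\<exists>l' k'. l' \<in> L \<and> l + int_mult k a = l' + int_mult k' a \<and> v = f l' + of_int k' * c"
    then obtain l' k' where "l' \<in> L" "l + int_mult k a = l' + int_mult k' a" "v = f l' + of_int k' * c"
      by blast
    then show "v = f l + of_int k * c" using additive_on_add_int_mult_well_defined[OF L f c that] by simp
  qed
  have "additive_on L' f'"
    unfolding additive_on_def L'_def
  proof (intro ballI)
    fix x y assume "x \<in> {l + int_mult k a | l k. l \<in> L}" "y \<in> {l + int_mult k a | l k. l \<in> L}"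
    then obtain l1 k1 l2 k2 where xy: "x = l1 + int_mult k1 a" "y = l2 + int_mult k2 a" "l1 \<in> L" "l2 \<in> L"
      by blast
    then have "x + y = (l1 + l2) + int_mult (k1 + k2) a" "l1 + l2 \<in> L"
      using L by (simp_all add: int_mult_add algebra_simps additive_subgroup_def)
    then have "f' (x + y) = f (l1 + l2) + of_int (k1 + k2) * c"
      by (simp add: f')
    then show "f' (x + y) = f' x + f' y"
      using xy by (simp add: f' additive_on_add[OF L f] algebra_simps)
  qed
  moreover have "x = x + int_mult 0 a" for x by simp
  then have "L \<subseteq> L'" unfolding L'_def by blast
  moreover have "a \<in> L'"
    using L unfolding L'_def additive_subgroup_def by (auto intro!: exI[of _ 0] exI[of _ 1])
  moreover have "\<forall>x\<in>L. f' x = f x" using f'[of _ 0] by simp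
  ultimately show ?thesis using additive_subgroup_add_int_mult[OF L] by (auto simp: L'_def)
qed

lemma additive_on_extend:
  assumes "additive_subgroup R" "additive_on R \<phi>" "finite A"
  shows "\<exists>L f. additive_subgroup L \<and> R \<subseteq> L \<and> A \<subseteq> L \<and> additive_on L f \<and> (\<forall>x\<in>R. f x = \<phi> x)"
  using \<open>finite A\<close>
proof (induction A rule: finite_induct)
  case empty
  then show ?case using assms by blast
next
  case (insert a A)
  then obtain L f where L: "additive_subgroup L" "R \<subseteq> L" "A \<subseteq> L" "additive_on L f" "\<forall>x\<in>R. f x = \<phi> x"
    by blast
  from additive_on_extend_one[OF L(1,4), of a] obtain L' f' where
    "additive_subgroup L'" "L \<subseteq> L'" "a \<in> L'" "additive_on L' f'" "\<forall>x\<in>L. f' x = f x"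
    by blast
  with L show ?case by (intro exI[of _ L'] exI[of _ f']) auto
qed

lemma Psi_comp_additive_on:
  assumes L: "additive_subgroup L" and f: "additive_on L f" and G: "range G \<subseteq> L"
    and "(x, y) \<in> tail_rel X"
  shows "Psi (f \<circ> G) x y = f (Psi G x y)"
proof -
  let ?D = "{j. x j \<noteq> y j}"
  have D: "finite ?D" using assms(4) by (simp add: tail_rel_def)
  have "Psi (f \<circ> G) x y = (\<Sum>j\<in>?D. f (G (y j) - G (x j)))"
    using G by (simp add: Psi_def additive_on_diff[OF L f] image_subset_iff)
  also have "\<dots> = f (Psi G x y)"
    using additive_on_sum[OF L f D, of "\<lambda>j. G (y j) - G (x j)"] G additive_subgroup_diff[OF L]
    by (simp add: Psi_def image_subset_iff)
  finally show ?thesis .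
qed

section \<open>Measurability on the configuration space\<close>

lemma topspace_conf_top [simp]: "topspace conf_top = UNIV"
  by (simp add: conf_top_def topspace_product_topology)

lemma openin_conf_top_cylinder: "openin conf_top {x. x j = s}"
proof -
  have "continuous_map conf_top (discrete_topology UNIV) (\<lambda>x. x j)"
    unfolding conf_top_def by (rule continuous_map_product_projection) simp
  from openin_continuous_map_preimage[OF this, of "{s}"] show ?thesis by simp
qed

lemma continuous_map_override_on: "continuous_map conf_top conf_top (\<lambda>x. override_on x v F)"
  unfolding conf_top_def continuous_map_componentwise_UNIV override_on_def
  by (auto intro: continuous_map_product_projection)

lemma measurable_count_space_comp2:
  fixes f :: "'a \<Rightarrow> 'b::countable"
  assumes "f \<in> M \<rightarrow>\<^sub>M count_space UNIV" "g \<in> M \<rightarrow>\<^sub>M count_space UNIV"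
  shows "(\<lambda>x. H (f x) (g x)) \<in> M \<rightarrow>\<^sub>M count_space UNIV"
  using measurable_compose_countable[of "\<lambda>i x. H i (g x)", OF _ assms(1)]
    measurable_compose[OF assms(2) measurable_count_space] by blast

lemma measurable_count_space_sum:
  fixes u :: "'i \<Rightarrow> 'a \<Rightarrow> 'b::{countable, comm_monoid_add}"
  assumes "finite F" "\<And>j. u j \<in> M \<rightarrow>\<^sub>M count_space UNIV"
  shows "(\<lambda>x. \<Sum>j\<in>F. u j x) \<in> M \<rightarrow>\<^sub>M count_space UNIV"
  using assms(1)
proof (induction F rule: finite_induct)
  case (insert j F)
  then show ?case using measurable_count_space_comp2[OF assms(2) insert(3), of "(+)"] by simp
qed simp

locale conf_measure =
  fixes X :: "('g::countable \<Rightarrow> 's::finite) set" and M :: "('g \<Rightarrow> 's) measure"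
  assumes closed_X: "closedin conf_top X"
    and sets_M: "sets M = sets (borel_of (subtopology conf_top X))"
    and space_M: "space M = X"
begin

lemma sets_eq_sigma_sets: "sets M = sigma_sets X {U. openin (subtopology conf_top X) U}"
proof -
  have "{U. openin (subtopology conf_top X) U} \<subseteq> Pow X"
    by (auto dest!: openin_subset)
  then show ?thesis unfolding sets_M borel_of_def by (simp add: sets_measure_of)
qed

lemma openin_sets: "openin (subtopology conf_top X) U \<Longrightarrow> U \<in> sets M"
  unfolding sets_eq_sigma_sets by (auto intro: sigma_sets.Basic)

lemma closedin_sets: "closedin (subtopology conf_top X) U \<Longrightarrow> U \<in> sets M"
  using openin_sets[of "X - U"] sets.compl_sets[of "X - U" M]
  by (simp add: closedin_def space_M Diff_Diff_Int Int_absorb1)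

lemma sets_subset_X: "A \<in> sets M \<Longrightarrow> A \<subseteq> X"
  using sets.sets_into_space space_M by blast

lemma continuous_map_measurable:
  assumes f: "continuous_map conf_top conf_top f" and D: "D \<in> sets M" and fD: "f ` D \<subseteq> X"
  shows "f \<in> measurable (restrict_space M D) M"
proof -
  have "f \<in> measurable (restrict_space M D) (borel_of (subtopology conf_top X))"
    unfolding borel_of_def
  proof (rule measurable_measure_of)
    show "f \<in> space (restrict_space M D) \<rightarrow> topspace (subtopology conf_top X)"
      using fD by (auto simp: space_restrict_space)
  next
    fix U assume "U \<in> {U. openin (subtopology conf_top X) U}"
    then obtain V where V: "openin conf_top V" "U = V \<inter> X" by (auto simp: openin_subtopology)
    have "openin conf_top {x \<in> topspace conf_top. f x \<in> V}"
      by (rule openin_continuous_map_preimage[OF f V(1)])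
    then have "openin (subtopology conf_top X) ({x. f x \<in> V} \<inter> X)"
      by (auto simp: openin_subtopology)
    then have "D \<inter> ({x. f x \<in> V} \<inter> X) \<in> sets M" using D openin_sets by blast
    moreover have "f -` U \<inter> space (restrict_space M D) = D \<inter> ({x. f x \<in> V} \<inter> X)"
      using fD sets_subset_X[OF D] V(2) by (auto simp: space_restrict_space space_M)
    ultimately show "f -` U \<inter> space (restrict_space M D) \<in> sets (restrict_space M D)"
      using D by (simp add: sets_restrict_space_iff space_M sets_subset_X Int_absorb2)
  qed (auto dest!: openin_subset)
  then show ?thesis by (simp add: measurable_cong_sets[OF refl sets_M])
qed

lemma coordinate_measurable: "(\<lambda>x. x j) \<in> measurable M (count_space UNIV)"
proof -
  have "{x\<in>X. x j = s} \<in> sets M" for s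
    using openin_sets[of "{x. x j = s} \<inter> X"] openin_conf_top_cylinder[of j s]
    by (auto simp: openin_subtopology Collect_conj_eq Int_commute)
  then show ?thesis
    by (subst measurable_count_space_eq_countable) (auto simp: space_M vimage_def Int_def conj_commute)
qed

lemma measurable_cocycle:
  fixes G :: "'s \<Rightarrow> 'a::{ab_group_add, countable}"
  assumes \<Phi>: "\<Phi> \<in> restrict_space M B \<rightarrow>\<^sub>M M" and tail: "\<And>x. x \<in> B \<Longrightarrow> (x, \<Phi> x) \<in> tail_rel X"
  shows "(\<lambda>x. Psi G x (\<Phi> x)) \<in> restrict_space M B \<rightarrow>\<^sub>M count_space UNIV"
proof -
  let ?N = "restrict_space M B"
  have coord: "(\<lambda>x. x j) \<in> ?N \<rightarrow>\<^sub>M count_space UNIV" for j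
    by (rule measurable_restrict_space1[OF coordinate_measurable])
  have coord_\<Phi>: "(\<lambda>x. \<Phi> x j) \<in> ?N \<rightarrow>\<^sub>M count_space UNIV" for j
    using measurable_compose[OF \<Phi> coordinate_measurable] .
  have diff: "(\<lambda>x. {j. x j \<noteq> \<Phi> x j}) \<in> ?N \<rightarrow>\<^sub>M count_space {F. finite F}"
  proof (rule measurable_count_space_eq_countable[THEN iffD2], rule countable_Collect_finite, intro conjI)
    show "(\<lambda>x. {j. x j \<noteq> \<Phi> x j}) \<in> space ?N \<rightarrow> {F. finite F}"
      using tail by (auto simp: space_restrict_space tail_rel_def)
    show "\<forall>F\<in>{F. finite F}. (\<lambda>x. {j. x j \<noteq> \<Phi> x j}) -` {F} \<inter> space ?N \<in> sets ?N"
    proof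
      fix F :: "'g set"
      have "Measurable.pred ?N (\<lambda>x. (x j \<noteq> \<Phi> x j) = (j \<in> F))" for j
        using measurable_count_space_comp2[OF coord[of j] coord_\<Phi>[of j], of "\<lambda>a b. (a \<noteq> b) = (j \<in> F)"]
        by simp
      then have "Measurable.pred ?N (\<lambda>x. \<forall>j. (x j \<noteq> \<Phi> x j) = (j \<in> F))"
        by (rule pred_intros_countable(1))
      moreover have "(\<lambda>x. {j. x j \<noteq> \<Phi> x j}) -` {F} \<inter> space ?N = {x\<in>space ?N. \<forall>j. (x j \<noteq> \<Phi> x j) = (j \<in> F)}"
        by auto
      ultimately show "(\<lambda>x. {j. x j \<noteq> \<Phi> x j}) -` {F} \<inter> space ?N \<in> sets ?N"
        by (simp add: pred_def)
    qed
  qed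
  have "(\<lambda>x. (\<lambda>F x. \<Sum>j\<in>F. G (\<Phi> x j) - G (x j)) {j. x j \<noteq> \<Phi> x j} x) \<in> ?N \<rightarrow>\<^sub>M count_space UNIV"
    by (rule measurable_compose_countable'[OF _ diff countable_Collect_finite])
      (auto intro!: measurable_count_space_sum measurable_count_space_comp2[OF coord_\<Phi> coord])
  then show ?thesis by (simp add: Psi_def)
qed

end

section \<open>Measurable bijections and nonnegative integrals\<close>

lemma restrict_space_preimage_sets:
  assumes "B \<in> sets M" "f \<in> restrict_space M B \<rightarrow>\<^sub>M N" "A \<in> sets N"
  shows "{x\<in>B. f x \<in> A} \<in> sets M"
proof -
  have "f -` A \<inter> space (restrict_space M B) \<in> sets (restrict_space M B)"
    using measurable_sets[OF assms(2,3)] .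
  moreover have "f -` A \<inter> space (restrict_space M B) = {x\<in>B. f x \<in> A}"
    using sets.sets_into_space[OF assms(1)] by (auto simp: space_restrict_space)
  ultimately show ?thesis using assms(1) by (simp add: sets_restrict_space_iff)
qed

definition measurable_bij :: "'a measure \<Rightarrow> ('a \<Rightarrow> 'a) \<Rightarrow> ('a \<Rightarrow> 'a) \<Rightarrow> 'a set \<Rightarrow> 'a set \<Rightarrow> bool" where
  "measurable_bij M \<Phi> \<Phi>' B C \<longleftrightarrow> B \<in> sets M \<and> C \<in> sets M \<and>
     (\<forall>x\<in>B. \<Phi> x \<in> C \<and> \<Phi>' (\<Phi> x) = x) \<and> (\<forall>y\<in>C. \<Phi>' y \<in> B \<and> \<Phi> (\<Phi>' y) = y) \<and>
     \<Phi> \<in> measurable (restrict_space M B) M \<and> \<Phi>' \<in> measurable (restrict_space M C) M"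

lemma measurable_bij_inverse: "measurable_bij M \<Phi> \<Phi>' B C \<Longrightarrow> measurable_bij M \<Phi>' \<Phi> C B"
  unfolding measurable_bij_def by auto

lemma measurable_bij_image: "measurable_bij M \<Phi> \<Phi>' B C \<Longrightarrow> \<Phi> ` B = C"
  unfolding measurable_bij_def by force

lemma measurable_bij_preimage_sets:
  "measurable_bij M \<Phi> \<Phi>' B C \<Longrightarrow> A \<in> sets M \<Longrightarrow> {x\<in>B. \<Phi> x \<in> A} \<in> sets M"
  unfolding measurable_bij_def by (blast intro: restrict_space_preimage_sets)

lemma measurable_bij_image_sets:
  assumes "measurable_bij M \<Phi> \<Phi>' B C" "A \<in> sets M" "A \<subseteq> B"
  shows "\<Phi> ` A \<in> sets M"
proof -
  have "\<Phi> ` A = {y\<in>C. \<Phi>' y \<in> A}" using assms(1,3) unfolding measurable_bij_def by force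
  then show ?thesis
    using measurable_bij_preimage_sets[OF measurable_bij_inverse[OF assms(1)] assms(2)] by simp
qed

lemma measurable_bij_restrict:
  assumes "measurable_bij M \<Phi> \<Phi>' B C" "A \<in> sets M" "A \<subseteq> B"
  shows "measurable_bij M \<Phi> \<Phi>' A (\<Phi> ` A)"
proof -
  have "\<Phi> ` A \<subseteq> C" using assms unfolding measurable_bij_def by auto
  then show ?thesis
    using assms measurable_bij_image_sets[OF assms] unfolding measurable_bij_def
    by (auto intro: measurable_restrict_mono)
qed

lemma measurable_bij_comp:
  assumes "measurable_bij M \<Phi> \<Phi>' B C" "measurable_bij M \<Psi> \<Psi>' C D"
  shows "measurable_bij M (\<Psi> \<circ> \<Phi>) (\<Phi>' \<circ> \<Psi>') B D"
proof -
  have "\<Phi> \<in> measurable (restrict_space M B) (restrict_space M C)"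
    "\<Psi>' \<in> measurable (restrict_space M D) (restrict_space M C)"
    using assms unfolding measurable_bij_def
    by (auto simp: measurable_restrict_space2_iff space_restrict_space dest: sets.sets_into_space)
  then show ?thesis using assms unfolding measurable_bij_def by (auto intro: measurable_comp)
qed

lemma borel_bij_imp_measurable_bij:
  assumes "borel_bij M \<Phi> B C"
  shows "measurable_bij M \<Phi> (the_inv_into B \<Phi>) B C"
proof -
  have bij: "bij_betw \<Phi> B C" and B: "B \<in> sets M" and C: "C \<in> sets M"
    and m1: "\<Phi> \<in> measurable (restrict_space M B) (restrict_space M C)"
    and m2: "the_inv_into B \<Phi> \<in> measurable (restrict_space M C) (restrict_space M B)"
    using assms unfolding borel_bij_def by blast+
  then show ?thesis unfolding measurable_bij_def
    by (auto simp: measurable_restrict_space2_iff bij_betw_def the_inv_into_f_f f_the_inv_into_f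
        intro: the_inv_into_into)
qed

lemma measurable_bij_imp_borel_bij:
  assumes "measurable_bij M \<Phi> \<Phi>' B C"
  shows "borel_bij M \<Phi> B C"
proof -
  have B: "B \<in> sets M" and C: "C \<in> sets M"
    and \<Phi>: "\<forall>x\<in>B. \<Phi> x \<in> C \<and> \<Phi>' (\<Phi> x) = x" and \<Phi>': "\<forall>y\<in>C. \<Phi>' y \<in> B \<and> \<Phi> (\<Phi>' y) = y"
    and m1: "\<Phi> \<in> measurable (restrict_space M B) M" and m2: "\<Phi>' \<in> measurable (restrict_space M C) M"
    using assms unfolding measurable_bij_def by blast+
  have bij: "bij_betw \<Phi> B C" using bij_betw_byWitness[of B \<Phi>' \<Phi> C] \<Phi> \<Phi>' by blast
  have "the_inv_into B \<Phi> y = \<Phi>' y" if "y \<in> C" for y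
    using \<Phi>' that the_inv_into_f_f[OF bij_betw_imp_inj_on[OF bij]] by metis
  then have "the_inv_into B \<Phi> \<in> measurable (restrict_space M C) (restrict_space M B)
      \<longleftrightarrow> \<Phi>' \<in> measurable (restrict_space M C) (restrict_space M B)"
    using sets.sets_into_space[OF C] by (intro measurable_cong) (auto simp: space_restrict_space)
  moreover have "\<Phi>' \<in> measurable (restrict_space M C) (restrict_space M B)"
    using m2 \<Phi>' sets.sets_into_space[OF C]
    by (auto simp: measurable_restrict_space2_iff space_restrict_space)
  moreover have "\<Phi> \<in> measurable (restrict_space M B) (restrict_space M C)"
    using m1 \<Phi> sets.sets_into_space[OF B]
    by (auto simp: measurable_restrict_space2_iff space_restrict_space)
  ultimately show ?thesis unfolding borel_bij_def using B C bij by blast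
qed

lemma measurable_bij_distr_eq_density:
  assumes \<theta>: "measurable_bij M \<theta> \<theta>' S S'"
    and preserving: "\<And>A. A \<in> sets M \<Longrightarrow> A \<subseteq> S \<Longrightarrow> emeasure M (\<theta> ` A) = emeasure M A"
  shows "distr (restrict_space M S) M \<theta> = density M (indicator S')"
proof (rule measure_eqI)
  have S: "S \<in> sets M" and S': "S' \<in> sets M" and m: "\<theta> \<in> measurable (restrict_space M S) M"
    using \<theta> by (auto simp: measurable_bij_def)
  fix A assume "A \<in> sets (distr (restrict_space M S) M \<theta>)"
  then have A: "A \<in> sets M" by simp
  have pre: "\<theta> -` A \<inter> space (restrict_space M S) = \<theta>' ` (A \<inter> S')"
    using \<theta> sets.sets_into_space[OF S] unfolding measurable_bij_def
    by (auto simp: space_restrict_space) force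
  have sub: "\<theta>' ` (A \<inter> S') \<subseteq> S" and img: "\<theta> ` \<theta>' ` (A \<inter> S') = A \<inter> S'"
    using \<theta> unfolding measurable_bij_def by force+
  have sets: "\<theta>' ` (A \<inter> S') \<in> sets M"
    using measurable_bij_image_sets[OF measurable_bij_inverse[OF \<theta>], of "A \<inter> S'"] A S' by auto
  have "emeasure (distr (restrict_space M S) M \<theta>) A
      = emeasure (restrict_space M S) (\<theta> -` A \<inter> space (restrict_space M S))"
    using A by (simp add: emeasure_distr[OF m])
  also have "\<dots> = emeasure M (\<theta>' ` (A \<inter> S'))"
    unfolding pre using S sets sub by (simp add: emeasure_restrict_space)
  also have "\<dots> = emeasure M (A \<inter> S')" using preserving[OF sets sub] img by simp
  also have "\<dots> = (\<integral>\<^sup>+x. indicator (A \<inter> S') x \<partial>M)"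
    using A S' by simp
  also have "\<dots> = (\<integral>\<^sup>+x. indicator S' x * indicator A x \<partial>M)"
    by (intro nn_integral_cong) (auto split: split_indicator)
  also have "\<dots> = emeasure (density M (indicator S')) A"
    using A S' by (subst emeasure_density) auto
  finally show "emeasure (distr (restrict_space M S) M \<theta>) A = emeasure (density M (indicator S')) A" .
qed simp

lemma measurable_bij_nn_integral_transfer:
  assumes \<theta>: "measurable_bij M \<theta> \<theta>' S S'"
    and preserving: "\<And>A. A \<in> sets M \<Longrightarrow> A \<subseteq> S \<Longrightarrow> emeasure M (\<theta> ` A) = emeasure M A"
    and f: "f \<in> borel_measurable M"
  shows "(\<integral>\<^sup>+x\<in>S'. f x \<partial>M) = (\<integral>\<^sup>+x. f (\<theta> x) \<partial>restrict_space M S)"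
proof -
  have S': "S' \<in> sets M" and m: "\<theta> \<in> measurable (restrict_space M S) M"
    using \<theta> by (auto simp: measurable_bij_def)
  have "(\<integral>\<^sup>+x. f (\<theta> x) \<partial>restrict_space M S) = (\<integral>\<^sup>+x. f x \<partial>density M (indicator S'))"
    using nn_integral_distr[OF m, of f] f measurable_bij_distr_eq_density[OF \<theta> preserving] by simp
  then show ?thesis
    using f S' by (simp add: nn_integral_density mult.commute)
qed

lemma nn_integral_less_pointwise:
  assumes "f \<in> borel_measurable M" "g \<in> borel_measurable M" "integral\<^sup>N M f \<noteq> \<infinity>"
    and "\<And>x. x \<in> space M \<Longrightarrow> f x < g x" and "emeasure M (space M) \<noteq> 0"
  shows "integral\<^sup>N M f < integral\<^sup>N M g"
proof (rule nn_integral_less[OF assms(1-3)])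
  show "AE x in M. f x \<le> g x" using assms(4) by (intro AE_I2) (simp add: less_imp_le)
  have "(AE x in M. g x \<le> f x) \<longleftrightarrow> emeasure M (space M) = 0"
    by (rule AE_iff_measurable[OF sets.top]) (use assms(4) in \<open>auto simp: not_le\<close>)
  then show "\<not> (AE x in M. g x \<le> f x)" using assms(5) by simp
qed

lemma AE_eq_const_of_dichotomy:
  fixes f :: "'a \<Rightarrow> ennreal"
  assumes f: "f \<in> borel_measurable M"
    and integral: "integral\<^sup>N M f = c * emeasure M (space M)" and finite: "c * emeasure M (space M) \<noteq> \<infinity>"
    and nonzero: "emeasure M (space M) \<noteq> 0"
    and dichotomy: "(AE x in M. f x \<le> c) \<or> (AE x in M. c < f x)"
  shows "AE x in M. f x = c"
  using dichotomy
proof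
  assume le: "AE x in M. f x \<le> c"
  have "AE x in M. c \<le> f x"
  proof (rule ccontr)
    assume "\<not> (AE x in M. c \<le> f x)"
    then have "integral\<^sup>N M f < (\<integral>\<^sup>+x. c \<partial>M)"
      using nn_integral_less[OF f _ _ le] integral finite by simp
    then show False using integral by simp
  qed
  with le show ?thesis by eventually_elim simp
next
  assume gt: "AE x in M. c < f x"
  have "\<not> (AE x in M. f x \<le> c)"
  proof
    assume "AE x in M. f x \<le> c"
    with gt have "AE x in M. False" by eventually_elim simp
    moreover have "(AE x in M. False) \<longleftrightarrow> emeasure M (space M) = 0"
      by (rule AE_iff_measurable[OF sets.top]) simp
    ultimately show False using nonzero by simp
  qed
  moreover have "AE x in M. c \<le> f x" using gt by eventually_elim simp
  ultimately have "(\<integral>\<^sup>+x. c \<partial>M) < integral\<^sup>N M f"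
    using finite by (intro nn_integral_less[OF _ f]) simp_all
  then show ?thesis using integral by simp
qed

lemma AE_restrict_space_iff_null:
  assumes "B \<in> sets M" "{x\<in>B. \<not> P x} \<in> sets M"
  shows "(AE x in restrict_space M B. P x) \<longleftrightarrow> emeasure M {x\<in>B. \<not> P x} = 0"
proof -
  have "(AE x in M. x \<in> B \<longrightarrow> P x) \<longleftrightarrow> emeasure M {x\<in>B. \<not> P x} = 0"
    by (rule AE_iff_measurable[OF assms(2)]) (use sets.sets_into_space[OF assms(1)] in auto)
  then show ?thesis using assms(1) by (simp add: AE_restrict_space_iff)
qed

section \<open>Windows: a countable family of partial maps generating the tail relation\<close>

definition window_dom :: "('g \<Rightarrow> 's) set \<Rightarrow> 'g set \<Rightarrow> ('g \<Rightarrow> 's) \<Rightarrow> ('g \<Rightarrow> 's) \<Rightarrow> ('g \<Rightarrow> 's) set" where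
  "window_dom X F u v = {x\<in>X. (\<forall>j\<in>F. x j = u j) \<and> override_on x v F \<in> X}"

definition windows :: "('g set \<times> ('g \<Rightarrow> 's) \<times> ('g \<Rightarrow> 's)) set" where
  "windows = {(F, u, v). finite F \<and> u \<in> F \<rightarrow>\<^sub>E UNIV \<and> v \<in> F \<rightarrow>\<^sub>E UNIV}"

definition window_cocycle :: "('s \<Rightarrow> 'a::ab_group_add) \<Rightarrow> 'g set \<Rightarrow> ('g \<Rightarrow> 's) \<Rightarrow> ('g \<Rightarrow> 's) \<Rightarrow> 'a" where
  "window_cocycle G F u v = (\<Sum>j\<in>F. G (v j) - G (u j))"

lemma countable_windows: "countable (windows :: ('g::countable set \<times> ('g \<Rightarrow> 's::finite) \<times> ('g \<Rightarrow> 's)) set)"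
proof -
  have eq: "windows = (\<Union>F\<in>{F. finite F}. Pair F ` ((F \<rightarrow>\<^sub>E (UNIV :: 's set)) \<times> (F \<rightarrow>\<^sub>E UNIV)))"
    unfolding windows_def by auto
  show ?thesis
    unfolding eq
    by (intro countable_UN[OF countable_Collect_finite] countable_finite finite_imageI
        finite_cartesian_product finite_PiE) auto
qed

lemma window_tail_rel:
  assumes "finite F" "x \<in> window_dom X F u v"
  shows "(x, override_on x v F) \<in> tail_rel X" "Psi G x (override_on x v F) = window_cocycle G F u v"
proof -
  have diff: "{j. x j \<noteq> override_on x v F j} \<subseteq> F" by (auto simp: override_on_def)
  then show "(x, override_on x v F) \<in> tail_rel X"
    using assms by (auto simp: tail_rel_def window_dom_def intro: finite_subset)
  show "Psi G x (override_on x v F) = window_cocycle G F u v"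
    using assms(2) by (simp add: Psi_eq_sum[OF assms(1) diff] window_cocycle_def window_dom_def)
qed

lemma tail_rel_window:
  assumes "(x, y) \<in> tail_rel X"
  obtains F u v where "(F, u, v) \<in> windows" "x \<in> window_dom X F u v" "y = override_on x v F"
    "Psi G x y = window_cocycle G F u v"
proof
  let ?F = "{j. x j \<noteq> y j}"
  have "finite ?F" using assms by (simp add: tail_rel_def)
  then show "(?F, restrict x ?F, restrict y ?F) \<in> windows" by (simp add: windows_def)
  show y: "y = override_on x (restrict y ?F) ?F" by (auto simp: override_on_def)
  show "x \<in> window_dom X ?F (restrict x ?F) (restrict y ?F)"
    using assms y[symmetric] by (simp add: window_dom_def tail_rel_def)
  show "Psi G x y = window_cocycle G ?F (restrict x ?F) (restrict y ?F)"
    by (simp add: Psi_def window_cocycle_def)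
qed

lemma tail_rel_Psi_Image_eq:
  "tail_rel_Psi X G `` E =
     (\<Union>(F, u, v)\<in>{(F, u, v)\<in>windows. window_cocycle G F u v = 0}.
        (\<lambda>x. override_on x v F) ` (E \<inter> window_dom X F u v))"
  (is "?lhs = ?rhs")
proof
  show "?lhs \<subseteq> ?rhs"
  proof
    fix y assume "y \<in> ?lhs"
    then obtain x where x: "x \<in> E" "(x, y) \<in> tail_rel X" "Psi G x y = 0"
      by (auto simp: tail_rel_Psi_def)
    from tail_rel_window[OF x(2), of G] obtain F u v where w:
      "(F, u, v) \<in> windows" "x \<in> window_dom X F u v" "y = override_on x v F" "Psi G x y = window_cocycle G F u v" .
    then have "y \<in> (\<lambda>x. override_on x v F) ` (E \<inter> window_dom X F u v)" using x(1) by blast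
    then show "y \<in> ?rhs" using w x(3) by (intro UN_I[of "(F, u, v)"]) auto
  qed
  show "?rhs \<subseteq> ?lhs"
  proof
    fix y assume "y \<in> ?rhs"
    then obtain F u v where w: "(F, u, v) \<in> windows" "window_cocycle G F u v = 0"
      and "y \<in> (\<lambda>x. override_on x v F) ` (E \<inter> window_dom X F u v)"
      by blast
    then obtain x where x: "x \<in> E" "x \<in> window_dom X F u v" "y = override_on x v F"
      by blast
    have "finite F" using w(1) by (simp add: windows_def)
    then have "(x, y) \<in> tail_rel X" "Psi G x y = 0"
      using window_tail_rel(1)[of F x X u v] window_tail_rel(2)[of F x X u v G] x(2,3) w(2) by simp_all
    then have "(x, y) \<in> tail_rel_Psi X G" by (simp add: tail_rel_Psi_def)
    then show "y \<in> ?lhs" using x(1) by blast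
  qed
qed

context conf_measure
begin

lemma cylinder_sets: "{x\<in>space M. \<forall>j\<in>F. x j = u j} \<in> sets M"
proof (rule sets.sets_Collect_countable_All')
  fix j
  show "{x\<in>space M. x j = u j} \<in> sets M"
    using measurable_sets[OF coordinate_measurable, of "{u j}" j] by (simp add: vimage_def Int_def conj_commute)
qed simp

lemma window_dom_sets: "window_dom X F u v \<in> sets M"
proof -
  have "closedin conf_top {x. override_on x v F \<in> X}"
    using closedin_continuous_map_preimage[OF continuous_map_override_on closed_X, of v F] by simp
  then have "closedin (subtopology conf_top X) ({x. override_on x v F \<in> X} \<inter> X)"
    unfolding closedin_subtopology by blast
  then have "{x. override_on x v F \<in> X} \<inter> X \<in> sets M" by (rule closedin_sets)
  moreover have "window_dom X F u v = {x\<in>space M. \<forall>j\<in>F. x j = u j} \<inter> ({x. override_on x v F \<in> X} \<inter> X)"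
    by (auto simp: window_dom_def space_M)
  ultimately show ?thesis using cylinder_sets by simp
qed

lemma measurable_bij_window:
  "measurable_bij M (\<lambda>x. override_on x v F) (\<lambda>x. override_on x u F) (window_dom X F u v) (window_dom X F v u)"
proof -
  have inverse: "override_on (override_on x v F) u F = x" if "x \<in> window_dom X F u v" for x u v
  proof
    fix j
    show "override_on (override_on x v F) u F j = x j"
      using that by (cases "j \<in> F") (simp_all add: window_dom_def)
  qed
  have into: "override_on x v F \<in> window_dom X F v u" if "x \<in> window_dom X F u v" for x u v
    using that inverse[OF that] by (simp add: window_dom_def)
  have measurable: "(\<lambda>x. override_on x v F) \<in> measurable (restrict_space M (window_dom X F u v)) M" for u v
    by (rule continuous_map_measurable[OF continuous_map_override_on window_dom_sets])
      (auto simp: window_dom_def)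
  show ?thesis
    unfolding measurable_bij_def
    using window_dom_sets inverse into measurable by blast
qed

end

section \<open>Partial maps with constant cocycle\<close>

locale ergodic_tail_measure = conf_measure X p + prob_space p
  for X :: "('g::countable \<Rightarrow> 's::finite) set" and p :: "('g \<Rightarrow> 's) measure" +
  fixes G :: "'s \<Rightarrow> 'a::{ab_group_add, countable}"
  assumes nonsingular_tail: "nonsingular p (tail_rel X)"
    and invariant_tail_Psi: "invariant p (tail_rel_Psi X G)"
    and ergodic_tail_Psi: "ergodic p (tail_rel_Psi X G)"
begin

definition cocycle_map :: "'a \<Rightarrow> (('g \<Rightarrow> 's) \<Rightarrow> ('g \<Rightarrow> 's)) \<Rightarrow> (('g \<Rightarrow> 's) \<Rightarrow> ('g \<Rightarrow> 's))
    \<Rightarrow> ('g \<Rightarrow> 's) set \<Rightarrow> ('g \<Rightarrow> 's) set \<Rightarrow> bool" where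
  "cocycle_map h \<Phi> \<Phi>' B C \<longleftrightarrow> measurable_bij p \<Phi> \<Phi>' B C \<and> (\<forall>x\<in>B. (x, \<Phi> x) \<in> tail_rel X \<and> Psi G x (\<Phi> x) = h)"

lemma cocycle_map_measurable_bij: "cocycle_map h \<Phi> \<Phi>' B C \<Longrightarrow> measurable_bij p \<Phi> \<Phi>' B C"
  by (simp add: cocycle_map_def)

lemma cocycle_map_sets:
  assumes "cocycle_map h \<Phi> \<Phi>' B C"
  shows "B \<in> sets p" "C \<in> sets p"
  using assms by (simp_all add: cocycle_map_def measurable_bij_def)

lemma cocycle_map_inverse:
  assumes \<Phi>: "cocycle_map h \<Phi> \<Phi>' B C"
  shows "cocycle_map (- h) \<Phi>' \<Phi> C B"
proof -
  have "(y, \<Phi>' y) \<in> tail_rel X \<and> Psi G y (\<Phi>' y) = - h" if "y \<in> C" for y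
  proof -
    have "\<Phi>' y \<in> B" "\<Phi> (\<Phi>' y) = y"
      using \<Phi> that by (auto simp: cocycle_map_def measurable_bij_def)
    then have "(\<Phi>' y, y) \<in> tail_rel X" "Psi G (\<Phi>' y) y = h"
      using \<Phi> by (metis cocycle_map_def)+
    then show ?thesis using tail_rel_sym Psi_swap by metis
  qed
  then show ?thesis
    using measurable_bij_inverse[OF cocycle_map_measurable_bij[OF \<Phi>]] unfolding cocycle_map_def by blast
qed

lemma cocycle_map_restrict:
  assumes "cocycle_map h \<Phi> \<Phi>' B C" "A \<in> sets p" "A \<subseteq> B"
  shows "cocycle_map h \<Phi> \<Phi>' A (\<Phi> ` A)"
  using assms measurable_bij_restrict[of p \<Phi> \<Phi>' B C A] unfolding cocycle_map_def by blast

lemma cocycle_map_comp: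
  assumes \<Phi>: "cocycle_map h \<Phi> \<Phi>' B C" and \<Psi>: "cocycle_map k \<Psi> \<Psi>' C D"
  shows "cocycle_map (h + k) (\<Psi> \<circ> \<Phi>) (\<Phi>' \<circ> \<Psi>') B D"
proof -
  have "(x, \<Psi> (\<Phi> x)) \<in> tail_rel X \<and> Psi G x (\<Psi> (\<Phi> x)) = h + k" if "x \<in> B" for x
  proof -
    have "\<Phi> x \<in> C" using \<Phi> that by (simp add: cocycle_map_def measurable_bij_def)
    then have "(x, \<Phi> x) \<in> tail_rel X" "Psi G x (\<Phi> x) = h"
      "(\<Phi> x, \<Psi> (\<Phi> x)) \<in> tail_rel X" "Psi G (\<Phi> x) (\<Psi> (\<Phi> x)) = k"
      using \<Phi> \<Psi> that by (simp_all add: cocycle_map_def)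
    then show ?thesis using tail_rel_trans Psi_trans by metis
  qed
  then show ?thesis
    using measurable_bij_comp[OF cocycle_map_measurable_bij[OF \<Phi>] cocycle_map_measurable_bij[OF \<Psi>]]
    unfolding cocycle_map_def by simp
qed

lemma cocycle_map_window:
  assumes "finite F"
  shows "cocycle_map (window_cocycle G F u v) (\<lambda>x. override_on x v F) (\<lambda>x. override_on x u F)
    (window_dom X F u v) (window_dom X F v u)"
  unfolding cocycle_map_def using measurable_bij_window window_tail_rel[OF assms] by blast

lemma cocycle_map_null:
  assumes \<Phi>: "cocycle_map h \<Phi> \<Phi>' B C" and A: "A \<in> sets p" "A \<subseteq> B" "emeasure p A = 0"
  shows "emeasure p (\<Phi> ` A) = 0"
proof -
  have "A \<in> null_sets p" using A by (simp add: null_sets_def)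
  then have "tail_rel X `` A \<in> null_sets p"
    using nonsingular_tail unfolding nonsingular_def by blast
  moreover have "\<Phi> ` A \<subseteq> tail_rel X `` A" using \<Phi> A(2) by (auto simp: cocycle_map_def)
  moreover have "\<Phi> ` A \<in> sets p"
    using measurable_bij_image_sets[OF cocycle_map_measurable_bij[OF \<Phi>] A(1,2)] .
  ultimately show ?thesis using null_sets_subset by blast
qed

lemma cocycle_map_0_emeasure:
  assumes \<Phi>: "cocycle_map 0 \<Phi> \<Phi>' B C" and "A \<in> sets p" "A \<subseteq> B"
  shows "emeasure p (\<Phi> ` A) = emeasure p A"
proof -
  have "\<forall>x\<in>B. (x, \<Phi> x) \<in> tail_rel_Psi X G" using \<Phi> by (simp add: cocycle_map_def tail_rel_Psi_def)
  then show ?thesis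
    using invariant_tail_Psi measurable_bij_imp_borel_bij[OF cocycle_map_measurable_bij[OF \<Phi>]] assms(2,3)
    unfolding invariant_def by blast
qed

lemma cocycle_map_emeasure_nonzero:
  assumes \<Phi>: "cocycle_map h \<Phi> \<Phi>' B C" and "emeasure p B \<noteq> 0"
  shows "emeasure p C \<noteq> 0"
  using cocycle_map_null[OF cocycle_map_inverse[OF \<Phi>] cocycle_map_sets(2)[OF \<Phi>] order_refl] assms
    measurable_bij_image[OF measurable_bij_inverse[OF cocycle_map_measurable_bij[OF \<Phi>]]] by auto

section \<open>Ergodicity links any two sets of positive measure\<close>

lemma tail_rel_Psi_Image_sets:
  assumes "E \<in> sets p"
  shows "tail_rel_Psi X G `` E \<in> sets p"
  unfolding tail_rel_Psi_Image_eq
proof (rule sets.countable_UN'')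
  show "countable {(F :: 'g set, u, v)\<in>windows. window_cocycle G F u v = 0}"
    using countable_windows by (rule countable_subset[rotated]) blast
next
  fix w assume "w \<in> {(F :: 'g set, u, v)\<in>windows. window_cocycle G F u v = 0}"
  then obtain F u v where w: "w = (F, u, v)" "finite F" by (auto simp: windows_def)
  have "(\<lambda>x. override_on x v F) ` (E \<inter> window_dom X F u v) \<in> sets p"
    by (rule measurable_bij_image_sets[OF cocycle_map_measurable_bij[OF cocycle_map_window[OF w(2)]]])
      (use assms window_dom_sets in auto)
  then show "(case w of (F, u, v) \<Rightarrow> (\<lambda>x. override_on x v F) ` (E \<inter> window_dom X F u v)) \<in> sets p"
    using w(1) by simp
qed

lemma emeasure_tail_rel_Psi_Image:
  assumes "E \<in> sets p" "emeasure p E \<noteq> 0"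
  shows "emeasure p (tail_rel_Psi X G `` E) = 1"
proof -
  let ?E = "tail_rel_Psi X G `` E"
  have "(x, x) \<in> tail_rel_Psi X G" if "x \<in> E" for x
    using that sets_subset_X[OF assms(1)] by (auto simp: tail_rel_Psi_def intro: tail_rel_refl)
  then have "E \<subseteq> ?E" by blast
  then have "emeasure p E \<le> emeasure p ?E"
    by (rule emeasure_mono[OF _ tail_rel_Psi_Image_sets[OF assms(1)]])
  then have "emeasure p ?E \<noteq> 0" using assms(2) by auto
  moreover have "tail_rel_Psi X G `` ?E \<subseteq> ?E"
  proof
    fix z assume "z \<in> tail_rel_Psi X G `` ?E"
    then obtain x y where "x \<in> E" "(x, y) \<in> tail_rel_Psi X G" "(y, z) \<in> tail_rel_Psi X G" by blast
    then show "z \<in> ?E" using tail_rel_Psi_trans by blast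
  qed
  moreover have "\<forall>A\<in>sets p. tail_rel_Psi X G `` A \<subseteq> A \<longrightarrow> emeasure p A = 0 \<or> emeasure p A = 1"
    using ergodic_tail_Psi unfolding ergodic_def .
  ultimately show ?thesis
    using tail_rel_Psi_Image_sets[OF assms(1)] by blast
qed

lemma Int_tail_rel_Psi_Image_nonnull:
  assumes E: "E \<in> sets p" "emeasure p E \<noteq> 0" and B: "B \<in> sets p" "emeasure p B \<noteq> 0"
  shows "B \<inter> tail_rel_Psi X G `` E \<notin> null_sets p"
proof -
  let ?E = "tail_rel_Psi X G `` E"
  have E': "?E \<in> sets p" by (rule tail_rel_Psi_Image_sets[OF E(1)])
  have "emeasure p (space p - ?E) = emeasure p (space p) - emeasure p ?E"
    by (rule emeasure_compl[OF E']) (simp add: emeasure_finite)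
  then have "emeasure p (space p - ?E) = 0"
    using emeasure_tail_rel_Psi_Image[OF E] emeasure_space_1 by simp
  then have "space p - ?E \<in> null_sets p" using E' by (intro null_setsI) auto
  moreover have "B \<subseteq> (B \<inter> ?E) \<union> (space p - ?E)" using sets.sets_into_space[OF B(1)] by blast
  ultimately show ?thesis
    using B null_sets_subset[of "(B \<inter> ?E) \<union> (space p - ?E)" p B] by auto
qed

lemma window_image_nonnull:
  assumes E: "E \<in> sets p" "emeasure p E \<noteq> 0" and B: "B \<in> sets p" "emeasure p B \<noteq> 0"
  obtains F u v where "(F, u, v) \<in> windows" "window_cocycle G F u v = 0"
    "B \<inter> (\<lambda>x. override_on x v F) ` (E \<inter> window_dom X F u v) \<notin> null_sets p"
proof -
  define W where "W = {(F :: 'g set, u, v)\<in>windows. window_cocycle G F u v = 0}"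
  define piece where "piece F u v = B \<inter> (\<lambda>x. override_on x v F) ` (E \<inter> window_dom X F u v)" for F u v
  have "B \<inter> tail_rel_Psi X G `` E \<subseteq> (\<Union>(F, u, v)\<in>W. piece F u v)"
  proof
    fix y assume y: "y \<in> B \<inter> tail_rel_Psi X G `` E"
    then obtain w where "w \<in> W" "y \<in> (case w of (F, u, v) \<Rightarrow> (\<lambda>x. override_on x v F) ` (E \<inter> window_dom X F u v))"
      unfolding tail_rel_Psi_Image_eq W_def by blast
    moreover obtain F u v where "w = (F, u, v)" by (cases w)
    ultimately show "y \<in> (\<Union>(F, u, v)\<in>W. piece F u v)"
      using y by (intro UN_I[of "(F, u, v)"]) (simp_all add: piece_def)
  qed
  moreover have "B \<inter> tail_rel_Psi X G `` E \<in> sets p" using B(1) tail_rel_Psi_Image_sets[OF E(1)] by blast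
  moreover have "countable W"
    unfolding W_def using countable_windows by (rule countable_subset[rotated]) blast
  ultimately obtain w where "w \<in> W" "(case w of (F, u, v) \<Rightarrow> piece F u v) \<notin> null_sets p"
    using Int_tail_rel_Psi_Image_nonnull[OF E B] null_sets_UN'[of W "\<lambda>w. case w of (F, u, v) \<Rightarrow> piece F u v" p]
      null_sets_subset by blast
  moreover obtain F u v where "w = (F, u, v)" by (cases w)
  ultimately have "(F, u, v) \<in> windows" "window_cocycle G F u v = 0"
    "B \<inter> (\<lambda>x. override_on x v F) ` (E \<inter> window_dom X F u v) \<notin> null_sets p"
    by (simp_all add: W_def piece_def)
  then show ?thesis by (rule that)
qed

lemma cocycle_map_0_between:
  assumes E: "E \<in> sets p" "emeasure p E \<noteq> 0" and B: "B \<in> sets p" "emeasure p B \<noteq> 0"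
  obtains \<theta> \<theta>' S where "cocycle_map 0 \<theta> \<theta>' S (\<theta> ` S)" "S \<subseteq> E" "\<theta> ` S \<subseteq> B" "emeasure p S \<noteq> 0"
proof -
  obtain F u v where w: "(F, u, v) \<in> windows" "window_cocycle G F u v = 0"
    and pos: "B \<inter> (\<lambda>x. override_on x v F) ` (E \<inter> window_dom X F u v) \<notin> null_sets p"
    using window_image_nonnull[OF E B] by blast
  have F: "finite F" using w(1) by (simp add: windows_def)
  let ?\<theta> = "\<lambda>x. override_on x v F" and ?\<theta>' = "\<lambda>x. override_on x u F"
  define S where "S = E \<inter> {x \<in> window_dom X F u v. ?\<theta> x \<in> B}"
  have S_sets: "S \<in> sets p"
    unfolding S_def
    using measurable_bij_preimage_sets[OF cocycle_map_measurable_bij[OF cocycle_map_window[OF F]] B(1)] E(1)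
    by blast
  have \<theta>: "cocycle_map 0 ?\<theta> ?\<theta>' S (?\<theta> ` S)"
    using cocycle_map_restrict[OF cocycle_map_window[OF F] S_sets, of u v] w(2) by (auto simp: S_def)
  have "?\<theta> ` S = B \<inter> ?\<theta> ` (E \<inter> window_dom X F u v)" by (auto simp: S_def)
  then have "emeasure p (?\<theta> ` S) \<noteq> 0"
    using pos cocycle_map_sets(2)[OF \<theta>] by auto
  then have "emeasure p S \<noteq> 0" using cocycle_map_0_emeasure[OF \<theta> S_sets order_refl] by simp
  moreover have "S \<subseteq> E" "?\<theta> ` S \<subseteq> B" by (auto simp: S_def)
  ultimately show ?thesis using that[OF \<theta>] by blast
qed

lemma cocycle_map_conj_emeasure:
  assumes \<Phi>1: "cocycle_map h \<Phi>1 \<Phi>1' B1 C1" and \<Phi>2: "cocycle_map h \<Phi>2 \<Phi>2' B2 C2"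
    and \<theta>: "cocycle_map 0 \<theta> \<theta>' S (\<theta> ` S)" and S: "S \<subseteq> B1" "\<theta> ` S \<subseteq> B2"
  shows "emeasure p (\<Phi>2 ` \<theta> ` S) = emeasure p (\<Phi>1 ` S)"
proof -
  have S_sets: "S \<in> sets p" "\<theta> ` S \<in> sets p" using cocycle_map_sets[OF \<theta>] by simp_all
  have "cocycle_map (- h) \<Phi>1' \<Phi>1 (\<Phi>1 ` S) S"
    using cocycle_map_inverse[OF cocycle_map_restrict[OF \<Phi>1 S_sets(1) S(1)]] .
  from cocycle_map_comp[OF cocycle_map_comp[OF this \<theta>] cocycle_map_restrict[OF \<Phi>2 S_sets(2) S(2)]]
  have conj: "cocycle_map 0 (\<Phi>2 \<circ> (\<theta> \<circ> \<Phi>1')) (\<Phi>1 \<circ> \<theta>' \<circ> \<Phi>2') (\<Phi>1 ` S) (\<Phi>2 ` \<theta> ` S)"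
    by simp
  show ?thesis
    using cocycle_map_0_emeasure[OF conj cocycle_map_sets(1)[OF conj] order_refl]
      measurable_bij_image[OF cocycle_map_measurable_bij[OF conj]] by simp
qed

section \<open>Maps with a given cocycle scale the measure by a constant\<close>

lemma cocycle_map_density:
  assumes \<Phi>: "cocycle_map h \<Phi> \<Phi>' B C"
  obtains \<rho> where "\<rho> \<in> borel_measurable p"
    "\<And>A. A \<in> sets p \<Longrightarrow> A \<subseteq> B \<Longrightarrow> emeasure p (\<Phi> ` A) = (\<integral>\<^sup>+x\<in>A. \<rho> x \<partial>p)"
proof -
  have B: "B \<in> sets p" and C: "C \<in> sets p" using cocycle_map_sets[OF \<Phi>] by simp_all
  have \<Phi>': "\<Phi>' \<in> measurable (restrict_space p C) p"
    using cocycle_map_measurable_bij[OF \<Phi>] by (simp add: measurable_bij_def)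
  define \<nu> where "\<nu> = distr (restrict_space p C) p \<Phi>'"
  have \<nu>: "emeasure \<nu> A = emeasure p (\<Phi> ` (A \<inter> B))" if A: "A \<in> sets p" for A
  proof -
    have "\<Phi>' -` A \<inter> space (restrict_space p C) = \<Phi> ` (A \<inter> B)"
      using cocycle_map_measurable_bij[OF \<Phi>] sets.sets_into_space[OF C]
      unfolding measurable_bij_def by (auto simp: space_restrict_space) force
    moreover have "\<Phi> ` (A \<inter> B) \<subseteq> C"
      using cocycle_map_measurable_bij[OF \<Phi>] unfolding measurable_bij_def by blast
    ultimately show ?thesis
      using A C by (simp add: \<nu>_def emeasure_distr[OF \<Phi>'] emeasure_restrict_space)
  qed
  have "absolutely_continuous p \<nu>"
    unfolding absolutely_continuous_def
  proof
    fix A assume A: "A \<in> null_sets p"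
    then have "emeasure p (A \<inter> B) = 0" using null_set_Int2[OF A B] by blast
    then have "emeasure p (\<Phi> ` (A \<inter> B)) = 0"
      using A B by (intro cocycle_map_null[OF \<Phi>]) auto
    then show "A \<in> null_sets \<nu>" using \<nu> A by (simp add: \<nu>_def null_sets_def)
  qed
  then have density: "density p (RN_deriv p \<nu>) = \<nu>"
    by (rule density_RN_deriv) (simp add: \<nu>_def)
  show ?thesis
  proof
    fix A assume A: "A \<in> sets p" "A \<subseteq> B"
    have "emeasure p (\<Phi> ` A) = emeasure (density p (RN_deriv p \<nu>)) A"
      using \<nu>[OF A(1)] A(2) by (simp add: density Int_absorb2)
    then show "emeasure p (\<Phi> ` A) = (\<integral>\<^sup>+x\<in>A. RN_deriv p \<nu> x \<partial>p)"
      using A(1) by (simp add: emeasure_density)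
  qed simp
qed

lemma cocycle_map_density_dichotomy:
  assumes \<Phi>: "cocycle_map h \<Phi> \<Phi>' B C" and \<rho>: "\<rho> \<in> borel_measurable p"
    and density: "\<And>A. A \<in> sets p \<Longrightarrow> A \<subseteq> B \<Longrightarrow> emeasure p (\<Phi> ` A) = (\<integral>\<^sup>+x\<in>A. \<rho> x \<partial>p)"
  shows "(AE x in restrict_space p B. \<rho> x \<le> r) \<or> (AE x in restrict_space p B. r < \<rho> x)"
proof (rule ccontr)
  have B: "B \<in> sets p" using cocycle_map_sets[OF \<Phi>] by simp
  define E1 where "E1 = {x\<in>B. r < \<rho> x}"
  define E2 where "E2 = {x\<in>B. \<rho> x \<le> r}"
  have E_sets: "E1 \<in> sets p" "E2 \<in> sets p"
    using B \<rho> by (simp_all add: E1_def E2_def)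
  have "{x\<in>B. \<not> \<rho> x \<le> r} = E1" "{x\<in>B. \<not> r < \<rho> x} = E2"
    by (auto simp: E1_def E2_def not_le)
  moreover assume "\<not> ?thesis"
  ultimately have pos: "emeasure p E1 \<noteq> 0" "emeasure p E2 \<noteq> 0"
    using AE_restrict_space_iff_null[OF B, of "\<lambda>x. \<rho> x \<le> r"]
      AE_restrict_space_iff_null[OF B, of "\<lambda>x. r < \<rho> x"] E_sets by auto
  obtain \<theta> \<theta>' S where \<theta>: "cocycle_map 0 \<theta> \<theta>' S (\<theta> ` S)"
    and S: "S \<subseteq> E1" "\<theta> ` S \<subseteq> E2" "emeasure p S \<noteq> 0"
    using cocycle_map_0_between[OF E_sets(1) pos(1) E_sets(2) pos(2)] by blast
  have S_sets: "S \<in> sets p" "\<theta> ` S \<in> sets p" using cocycle_map_sets[OF \<theta>] by simp_all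
  have SB: "S \<subseteq> B" "\<theta> ` S \<subseteq> B" using S by (auto simp: E1_def E2_def)
  \<comment> \<open>conjugating \<open>\<theta>\<close> by \<open>\<Phi>\<close> gives \<open>\<integral>\<^sub>S \<rho> = \<integral>\<^sub>\<theta>\<^sub>S \<rho> = \<integral>\<^sub>S \<rho> \<circ> \<theta>\<close>, yet \<open>\<rho> \<circ> \<theta> \<le> r < \<rho>\<close> on \<open>S\<close>\<close>
  have "(\<integral>\<^sup>+x\<in>S. \<rho> x \<partial>p) = (\<integral>\<^sup>+x\<in>\<theta> ` S. \<rho> x \<partial>p)"
    using cocycle_map_conj_emeasure[OF \<Phi> \<Phi> \<theta> SB] density S_sets SB by simp
  also have "\<dots> = (\<integral>\<^sup>+x. \<rho> (\<theta> x) \<partial>restrict_space p S)"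
    using cocycle_map_0_emeasure[OF \<theta>] \<rho>
    by (intro measurable_bij_nn_integral_transfer[OF cocycle_map_measurable_bij[OF \<theta>]])
  finally have eq: "(\<integral>\<^sup>+x. \<rho> (\<theta> x) \<partial>restrict_space p S) = (\<integral>\<^sup>+x. \<rho> x \<partial>restrict_space p S)"
    using S_sets by (simp add: nn_integral_restrict_space)
  have "(\<integral>\<^sup>+x. \<rho> (\<theta> x) \<partial>restrict_space p S) < (\<integral>\<^sup>+x. \<rho> x \<partial>restrict_space p S)"
  proof (rule nn_integral_less_pointwise)
    show "(\<lambda>x. \<rho> (\<theta> x)) \<in> borel_measurable (restrict_space p S)"
      using cocycle_map_measurable_bij[OF \<theta>] \<rho> by (auto simp: measurable_bij_def)
    show "\<rho> \<in> borel_measurable (restrict_space p S)"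
      using \<rho> by (rule measurable_restrict_space1)
    show "(\<integral>\<^sup>+x. \<rho> (\<theta> x) \<partial>restrict_space p S) \<noteq> \<infinity>"
      using eq density[OF S_sets(1) SB(1)] S_sets emeasure_finite[of "\<Phi> ` S"]
      by (simp add: nn_integral_restrict_space)
    show "\<rho> (\<theta> x) < \<rho> x" if "x \<in> space (restrict_space p S)" for x
      using that S(1,2) S_sets by (force simp: space_restrict_space E1_def E2_def)
    show "emeasure (restrict_space p S) (space (restrict_space p S)) \<noteq> 0"
      using S(3) S_sets by (simp add: emeasure_restrict_space space_restrict_space)
  qed
  then show False using eq by simp
qed

lemma cocycle_map_emeasure_const:
  assumes \<Phi>: "cocycle_map h \<Phi> \<Phi>' B C" and B: "emeasure p B \<noteq> 0" and A: "A \<in> sets p" "A \<subseteq> B"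
  shows "emeasure p (\<Phi> ` A) = emeasure p C / emeasure p B * emeasure p A"
proof -
  obtain \<rho> where \<rho>: "\<rho> \<in> borel_measurable p"
    and density: "\<And>A. A \<in> sets p \<Longrightarrow> A \<subseteq> B \<Longrightarrow> emeasure p (\<Phi> ` A) = (\<integral>\<^sup>+x\<in>A. \<rho> x \<partial>p)"
    using cocycle_map_density[OF \<Phi>] by blast
  have B_sets: "B \<in> sets p" using cocycle_map_sets[OF \<Phi>] by simp
  define c where "c = emeasure p C / emeasure p B"
  have space_B: "space (restrict_space p B) = B"
    using B_sets by (simp add: space_restrict_space sets.sets_into_space Int_absorb2)
  have emeasure_B: "emeasure (restrict_space p B) B = emeasure p B"
    using B_sets by (simp add: emeasure_restrict_space)
  have cB: "c * emeasure p B = emeasure p C"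
  proof -
    have "emeasure p B < top" using emeasure_finite[of B] by (rule less_top[THEN iffD1])
    then show ?thesis using B by (simp add: c_def ennreal_divide_times)
  qed
  have "(\<integral>\<^sup>+x. \<rho> x \<partial>restrict_space p B) = emeasure p (\<Phi> ` B)"
    using density[OF B_sets order_refl] B_sets by (simp add: nn_integral_restrict_space)
  also have "\<dots> = c * emeasure (restrict_space p B) (space (restrict_space p B))"
    using measurable_bij_image[OF cocycle_map_measurable_bij[OF \<Phi>]] cB space_B emeasure_B by simp
  finally have "AE x in restrict_space p B. \<rho> x = c"
    using cB space_B emeasure_B B emeasure_finite[of C]
      cocycle_map_density_dichotomy[OF \<Phi> \<rho> density, of c]
    by (intro AE_eq_const_of_dichotomy measurable_restrict_space1[OF \<rho>]) simp_all
  then have "AE x in p. x \<in> B \<longrightarrow> \<rho> x = c"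
    using B_sets by (simp add: AE_restrict_space_iff)
  then have "(\<integral>\<^sup>+x\<in>A. \<rho> x \<partial>p) = (\<integral>\<^sup>+x. c * indicator A x \<partial>p)"
    using A(2) by (intro nn_integral_cong_AE) (auto split: split_indicator)
  then show ?thesis
    using density[OF A] A(1) by (simp add: c_def nn_integral_cmult_indicator)
qed

lemma cocycle_map_ratio_eq:
  assumes \<Phi>1: "cocycle_map h \<Phi>1 \<Phi>1' B1 C1" "emeasure p B1 \<noteq> 0"
    and \<Phi>2: "cocycle_map h \<Phi>2 \<Phi>2' B2 C2" "emeasure p B2 \<noteq> 0"
  shows "emeasure p C1 / emeasure p B1 = emeasure p C2 / emeasure p B2"
proof -
  obtain \<theta> \<theta>' S where \<theta>: "cocycle_map 0 \<theta> \<theta>' S (\<theta> ` S)" and S: "S \<subseteq> B1" "\<theta> ` S \<subseteq> B2" "emeasure p S \<noteq> 0"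
    using cocycle_map_0_between[OF cocycle_map_sets(1)[OF \<Phi>1(1)] \<Phi>1(2) cocycle_map_sets(1)[OF \<Phi>2(1)] \<Phi>2(2)]
    by blast
  have S_sets: "S \<in> sets p" "\<theta> ` S \<in> sets p" using cocycle_map_sets[OF \<theta>] by simp_all
  have "emeasure p S * (emeasure p C1 / emeasure p B1) = emeasure p (\<Phi>1 ` S)"
    using cocycle_map_emeasure_const[OF \<Phi>1 S_sets(1) S(1)] by (simp add: mult.commute)
  also have "\<dots> = emeasure p (\<Phi>2 ` \<theta> ` S)"
    using cocycle_map_conj_emeasure[OF \<Phi>1(1) \<Phi>2(1) \<theta> S(1,2)] by simp
  also have "\<dots> = emeasure p S * (emeasure p C2 / emeasure p B2)"
    using cocycle_map_emeasure_const[OF \<Phi>2 S_sets(2) S(2)] cocycle_map_0_emeasure[OF \<theta> S_sets(1) order_refl]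
    by (simp add: mult.commute)
  finally show ?thesis using S(3) emeasure_finite[of S] by (simp add: ennreal_mult_cancel_left)
qed

section \<open>The dilation homomorphism\<close>

definition dilation :: "'a \<Rightarrow> ennreal" where
  "dilation h = (SOME c. \<forall>\<Phi> \<Phi>' B C A. cocycle_map h \<Phi> \<Phi>' B C \<longrightarrow> A \<in> sets p \<longrightarrow> A \<subseteq> B \<longrightarrow>
     emeasure p (\<Phi> ` A) = c * emeasure p A)"

definition realizable :: "'a set" where
  "realizable = {h. \<exists>\<Phi> \<Phi>' B C. cocycle_map h \<Phi> \<Phi>' B C \<and> emeasure p B \<noteq> 0}"

lemma cocycle_map_dilation:
  assumes "cocycle_map h \<Phi> \<Phi>' B C" "A \<in> sets p" "A \<subseteq> B"
  shows "emeasure p (\<Phi> ` A) = dilation h * emeasure p A"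
proof -
  have null: "emeasure p (\<Phi> ` A) = 0 \<and> emeasure p A = 0"
    if "cocycle_map h \<Phi> \<Phi>' B C" "A \<in> sets p" "A \<subseteq> B" "emeasure p B = 0" for \<Phi> \<Phi>' B C A
    using that cocycle_map_null[OF that(1-3)] emeasure_mono[OF that(3) cocycle_map_sets(1)[OF that(1)]]
    by simp
  \<comment> \<open>a nonnull \<open>h\<close>-map determines the constant; if there is none, every constant works\<close>
  have "\<exists>c. \<forall>\<Phi> \<Phi>' B C A. cocycle_map h \<Phi> \<Phi>' B C \<longrightarrow> A \<in> sets p \<longrightarrow> A \<subseteq> B \<longrightarrow>
      emeasure p (\<Phi> ` A) = c * emeasure p A"
  proof (cases "h \<in> realizable")
    case True
    then obtain \<Phi>0 \<Phi>0' B0 C0 where \<Phi>0: "cocycle_map h \<Phi>0 \<Phi>0' B0 C0" "emeasure p B0 \<noteq> 0"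
      by (auto simp: realizable_def)
    show ?thesis
    proof (intro exI allI impI)
      fix \<Phi> \<Phi>' B C A assume \<Phi>: "cocycle_map h \<Phi> \<Phi>' B C" and A: "A \<in> sets p" "A \<subseteq> B"
      show "emeasure p (\<Phi> ` A) = emeasure p C0 / emeasure p B0 * emeasure p A"
      proof (cases "emeasure p B = 0")
        case False
        then show ?thesis
          using cocycle_map_emeasure_const[OF \<Phi> False A] cocycle_map_ratio_eq[OF \<Phi> False \<Phi>0] by simp
      qed (use null[OF \<Phi> A] in simp)
    qed
  next
    case False
    show ?thesis
    proof (intro exI[of _ 0] allI impI)
      fix \<Phi> \<Phi>' B C A assume \<Phi>: "cocycle_map h \<Phi> \<Phi>' B C" and A: "A \<in> sets p" "A \<subseteq> B"
      then have "emeasure p B = 0" using False unfolding realizable_def by blast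
      then show "emeasure p (\<Phi> ` A) = 0 * emeasure p A" using null[OF \<Phi> A] by simp
    qed
  qed
  then have "\<forall>\<Phi> \<Phi>' B C A. cocycle_map h \<Phi> \<Phi>' B C \<longrightarrow> A \<in> sets p \<longrightarrow> A \<subseteq> B \<longrightarrow>
      emeasure p (\<Phi> ` A) = dilation h * emeasure p A"
    unfolding dilation_def by (rule someI_ex)
  then show ?thesis using assms by blast
qed

lemma dilation_nonzero_finite:
  assumes "h \<in> realizable"
  shows "dilation h \<noteq> 0" "dilation h \<noteq> \<infinity>"
proof -
  obtain \<Phi> \<Phi>' B C where \<Phi>: "cocycle_map h \<Phi> \<Phi>' B C" and B: "emeasure p B \<noteq> 0"
    using assms by (auto simp: realizable_def)
  have "emeasure p C = dilation h * emeasure p B"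
    using cocycle_map_dilation[OF \<Phi> cocycle_map_sets(1)[OF \<Phi>] order_refl]
      measurable_bij_image[OF cocycle_map_measurable_bij[OF \<Phi>]] by simp
  then show "dilation h \<noteq> 0" "dilation h \<noteq> \<infinity>"
    using cocycle_map_emeasure_nonzero[OF \<Phi> B] emeasure_finite[of C] B by auto
qed

lemma realizable_0: "0 \<in> realizable"
proof -
  have "measurable_bij p id id X X"
    unfolding measurable_bij_def
    using sets.top[of p] measurable_restrict_space1[OF measurable_ident] by (simp add: space_M)
  then have "cocycle_map 0 id id X X" by (simp add: cocycle_map_def tail_rel_refl)
  moreover have "emeasure p X \<noteq> 0" using emeasure_space_1 by (simp add: space_M)
  ultimately show ?thesis unfolding realizable_def by blast
qed

lemma realizable_uminus: "h \<in> realizable \<Longrightarrow> - h \<in> realizable"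
  using cocycle_map_inverse cocycle_map_emeasure_nonzero by (fastforce simp: realizable_def)

lemma realizable_add_dilation:
  assumes "h \<in> realizable" "k \<in> realizable"
  shows "h + k \<in> realizable" "dilation (h + k) = dilation h * dilation k"
proof -
  obtain \<Phi> \<Phi>' B C where \<Phi>: "cocycle_map h \<Phi> \<Phi>' B C" and B: "emeasure p B \<noteq> 0"
    using assms(1) by (auto simp: realizable_def)
  obtain \<Psi> \<Psi>' D E where \<Psi>: "cocycle_map k \<Psi> \<Psi>' D E" and D: "emeasure p D \<noteq> 0"
    using assms(2) by (auto simp: realizable_def)
  obtain \<theta> \<theta>' S where \<theta>: "cocycle_map 0 \<theta> \<theta>' S (\<theta> ` S)" and S: "S \<subseteq> C" "\<theta> ` S \<subseteq> D" "emeasure p S \<noteq> 0"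
    using cocycle_map_0_between[OF cocycle_map_sets(2)[OF \<Phi>] cocycle_map_emeasure_nonzero[OF \<Phi> B]
        cocycle_map_sets(1)[OF \<Psi>] D] by blast
  have S_sets: "S \<in> sets p" "\<theta> ` S \<in> sets p" using cocycle_map_sets[OF \<theta>] by simp_all
  have \<Phi>S: "cocycle_map h \<Phi> \<Phi>' (\<Phi>' ` S) S"
    using cocycle_map_inverse[OF cocycle_map_restrict[OF cocycle_map_inverse[OF \<Phi>] S_sets(1) S(1)]] by simp
  define A where "A = \<Phi>' ` S"
  have A_sets: "A \<in> sets p" using cocycle_map_sets(1)[OF \<Phi>S] by (simp add: A_def)
  have A: "emeasure p S = dilation h * emeasure p A"
    using cocycle_map_dilation[OF \<Phi>S A_sets] measurable_bij_image[OF cocycle_map_measurable_bij[OF \<Phi>S]]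
    by (simp add: A_def)
  then have A_nonzero: "emeasure p A \<noteq> 0" using S(3) by auto
  from cocycle_map_comp[OF cocycle_map_comp[OF \<Phi>S \<theta>] cocycle_map_restrict[OF \<Psi> S_sets(2) S(2)]]
  have hk: "cocycle_map (h + k) (\<Psi> \<circ> (\<theta> \<circ> \<Phi>)) (\<Phi>' \<circ> \<theta>' \<circ> \<Psi>') A (\<Psi> ` \<theta> ` S)"
    by (simp add: A_def)
  then show "h + k \<in> realizable" using A_nonzero by (auto simp: realizable_def)
  have "emeasure p A * dilation (h + k) = emeasure p (\<Psi> ` \<theta> ` S)"
    using cocycle_map_dilation[OF hk A_sets order_refl] measurable_bij_image[OF cocycle_map_measurable_bij[OF hk]]
    by (simp add: mult.commute)
  also have "\<dots> = dilation k * emeasure p S"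
    using cocycle_map_dilation[OF \<Psi> S_sets(2) S(2)] cocycle_map_0_emeasure[OF \<theta> S_sets(1) order_refl] by simp
  also have "\<dots> = emeasure p A * (dilation h * dilation k)"
    using A by (simp add: ac_simps)
  finally show "dilation (h + k) = dilation h * dilation k"
    using A_nonzero emeasure_finite[of A] by (simp add: ennreal_mult_cancel_left)
qed

lemma additive_subgroup_realizable: "additive_subgroup realizable"
  unfolding additive_subgroup_def using realizable_0 realizable_uminus realizable_add_dilation(1) by blast

definition log_dilation :: "'a \<Rightarrow> real" where
  "log_dilation h = ln (enn2real (dilation h))"

lemma exp_log_dilation:
  assumes "h \<in> realizable"
  shows "ennreal (exp (log_dilation h)) = dilation h"
proof -
  have "0 < enn2real (dilation h)" "dilation h < top"
    using dilation_nonzero_finite[OF assms] by (simp_all add: enn2real_positive_iff less_top[symmetric] zero_less_iff_neq_zero)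
  then show ?thesis by (simp add: log_dilation_def)
qed

lemma additive_on_log_dilation: "additive_on realizable log_dilation"
  unfolding additive_on_def
proof (intro ballI)
  fix h k assume hk: "h \<in> realizable" "k \<in> realizable"
  have "0 < enn2real (dilation h)" "0 < enn2real (dilation k)"
    using dilation_nonzero_finite[OF hk(1)] dilation_nonzero_finite[OF hk(2)]
    by (simp_all add: enn2real_positive_iff less_top[symmetric] zero_less_iff_neq_zero)
  then show "log_dilation (h + k) = log_dilation h + log_dilation k"
    using realizable_add_dilation(2)[OF hk] by (simp add: log_dilation_def enn2real_mult ln_mult)
qed

section \<open>Site conformality\<close>

lemma cocycle_level_set_sets:
  assumes \<Phi>: "measurable_bij p \<Phi> \<Phi>' B C" and tail: "\<And>x. x \<in> B \<Longrightarrow> (x, \<Phi> x) \<in> tail_rel X"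
    and A: "A \<in> sets p" "A \<subseteq> B"
  shows "{x\<in>A. Psi G x (\<Phi> x) = h} \<in> sets p"
proof -
  have B: "B \<in> sets p" using \<Phi> by (simp add: measurable_bij_def)
  have "(\<lambda>x. Psi G x (\<Phi> x)) \<in> restrict_space p B \<rightarrow>\<^sub>M count_space UNIV"
    using \<Phi> tail by (intro measurable_cocycle) (auto simp: measurable_bij_def)
  from restrict_space_preimage_sets[OF B this, of "{h}"]
  have "{x\<in>B. Psi G x (\<Phi> x) = h} \<in> sets p" by simp
  moreover have "{x\<in>A. Psi G x (\<Phi> x) = h} = A \<inter> {x\<in>B. Psi G x (\<Phi> x) = h}" using A(2) by auto
  ultimately show ?thesis using A(1) by auto
qed

lemma emeasure_image_cocycle_level_set:
  fixes f :: "'a \<Rightarrow> real"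
  assumes \<Phi>: "measurable_bij p \<Phi> \<Phi>' B C" and tail: "\<And>x. x \<in> B \<Longrightarrow> (x, \<Phi> x) \<in> tail_rel X"
    and f: "\<And>h. h \<in> realizable \<Longrightarrow> f h = log_dilation h"
    and A: "A \<in> sets p" "A \<subseteq> B"
  shows "emeasure p (\<Phi> ` {x\<in>A. Psi G x (\<Phi> x) = h}) = ennreal (exp (f h)) * emeasure p {x\<in>A. Psi G x (\<Phi> x) = h}"
proof -
  let ?A = "{x\<in>A. Psi G x (\<Phi> x) = h}"
  have A_sets: "?A \<in> sets p" by (rule cocycle_level_set_sets[OF \<Phi> tail A])
  have h: "cocycle_map h \<Phi> \<Phi>' ?A (\<Phi> ` ?A)"
    using measurable_bij_restrict[OF \<Phi> A_sets] tail A(2) by (auto simp: cocycle_map_def)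
  show ?thesis
  proof (cases "emeasure p ?A = 0")
    case False
    then have "h \<in> realizable" using h by (auto simp: realizable_def)
    then have "dilation h = ennreal (exp (f h))" using exp_log_dilation f by simp
    then show ?thesis using cocycle_map_dilation[OF h A_sets order_refl] by simp
  qed (use cocycle_map_dilation[OF h A_sets order_refl] in simp)
qed

lemma emeasure_image_eq_nn_integral:
  fixes f :: "'a \<Rightarrow> real"
  assumes \<Phi>: "measurable_bij p \<Phi> \<Phi>' B C" and tail: "\<And>x. x \<in> B \<Longrightarrow> (x, \<Phi> x) \<in> tail_rel X"
    and f: "\<And>h. h \<in> realizable \<Longrightarrow> f h = log_dilation h"
    and A: "A \<in> sets p" "A \<subseteq> B"
  shows "emeasure p (\<Phi> ` A) = (\<integral>\<^sup>+x\<in>A. ennreal (exp (f (Psi G x (\<Phi> x)))) \<partial>p)"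
proof -
  define A' where "A' h = {x\<in>A. Psi G x (\<Phi> x) = h}" for h
  have A'_sets: "A' h \<in> sets p" for h unfolding A'_def by (rule cocycle_level_set_sets[OF \<Phi> tail A])
  have "inj_on \<Phi> A" using \<Phi> A(2) unfolding measurable_bij_def by (metis inj_on_inverseI subsetD)
  then have "disjoint_family (\<lambda>h. \<Phi> ` A' h)"
    unfolding disjoint_family_on_def A'_def by (auto dest: inj_onD)
  moreover have "\<Phi> ` A = (\<Union>h. \<Phi> ` A' h)" by (auto simp: A'_def)
  ultimately have "emeasure p (\<Phi> ` A) = (\<integral>\<^sup>+h. emeasure p (\<Phi> ` A' h) \<partial>count_space UNIV)"
    using emeasure_UN_countable[of UNIV "\<lambda>h. \<Phi> ` A' h" p] A'_sets A(2)
      measurable_bij_image_sets[OF \<Phi>] by (simp add: A'_def subset_iff)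
  also have "\<dots> = (\<integral>\<^sup>+h. \<integral>\<^sup>+x. ennreal (exp (f h)) * indicator (A' h) x \<partial>p \<partial>count_space UNIV)"
    using emeasure_image_cocycle_level_set[OF \<Phi> tail f A] A'_sets
    by (simp add: A'_def nn_integral_cmult_indicator)
  also have "\<dots> = (\<integral>\<^sup>+x. \<integral>\<^sup>+h. ennreal (exp (f h)) * indicator (A' h) x \<partial>count_space UNIV \<partial>p)"
    using A'_sets by (intro nn_integral_count_space_nn_integral[symmetric]) auto
  also have "\<dots> = (\<integral>\<^sup>+x\<in>A. ennreal (exp (f (Psi G x (\<Phi> x)))) \<partial>p)"
  proof (rule nn_integral_cong)
    fix x
    have "indicator (A' h) x = (indicator {Psi G x (\<Phi> x)} h * indicator A x :: ennreal)" for h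
      by (auto simp: A'_def split: split_indicator)
    then show "(\<integral>\<^sup>+h. ennreal (exp (f h)) * indicator (A' h) x \<partial>count_space UNIV)
        = ennreal (exp (f (Psi G x (\<Phi> x)))) * indicator A x"
      by (simp add: mult.assoc[symmetric] nn_integral_multc)
  qed
  finally show ?thesis .
qed

theorem site_conformal: "site_conformal X p"
proof -
  obtain L f where L: "additive_subgroup L" "range G \<subseteq> L" "additive_on L f"
    and f: "\<forall>h\<in>realizable. f h = log_dilation h"
    using additive_on_extend[OF additive_subgroup_realizable additive_on_log_dilation, of "range G"] by auto
  show ?thesis
    unfolding site_conformal_def
  proof (intro exI[of _ "f \<circ> G"] conjI allI impI ballI)
    show "nonsingular p (tail_rel X)" by (rule nonsingular_tail)
  next
    fix \<Phi> B C A assume \<Phi>: "borel_bij p \<Phi> B C" and tail: "\<forall>x\<in>B. (x, \<Phi> x) \<in> tail_rel X"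
      and A: "A \<in> sets p" "A \<subseteq> B"
    have "(\<integral>\<^sup>+x\<in>A. ennreal (exp (f (Psi G x (\<Phi> x)))) \<partial>p)
        = (\<integral>\<^sup>+x\<in>A. ennreal (exp (Psi (f \<circ> G) x (\<Phi> x))) \<partial>p)"
      using tail A(2) Psi_comp_additive_on[OF L(1,3,2), of _ _ X]
      by (intro nn_integral_cong) (auto split: split_indicator)
    moreover have "emeasure p (\<Phi> ` A) = (\<integral>\<^sup>+x\<in>A. ennreal (exp (f (Psi G x (\<Phi> x)))) \<partial>p)"
      by (rule emeasure_image_eq_nn_integral[OF borel_bij_imp_measurable_bij[OF \<Phi>]]) (use tail f A in auto)
    ultimately show "emeasure p (\<Phi> ` A) = (\<integral>\<^sup>+x\<in>A. ennreal (exp (Psi (f \<circ> G) x (\<Phi> x))) \<partial>p)"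
      by simp
  qed
qed

end

theorem mainTheorem10:
  fixes X :: "('g::countable \<Rightarrow> 's::finite) set"
    and G :: "'s \<Rightarrow> 'a::{ab_group_add, countable}"
    and p :: "('g \<Rightarrow> 's) measure"
  assumes X_closed: "closedin conf_top X"
    and H_def: "H = subgroup_generated {Psi G x y | x y. (x, y) \<in> tail_rel X}"
    and transitive: "top_transitive (prod_topology (subtopology conf_top X) (discrete_topology H))
                       (skew_rel X G)"
    and prob: "prob_space p"
    and borel: "sets p = sets (borel_of (subtopology conf_top X))"
    and space: "space p = X"
    and nonsing: "nonsingular p (tail_rel X)"
    and inv: "invariant p (tail_rel_Psi X G)"
    and erg: "ergodic p (tail_rel_Psi X G)"
  shows "site_conformal X p"
proof -
  interpret ergodic_tail_measure X p G
    using X_closed borel space prob nonsing inv erg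
    by (intro ergodic_tail_measure.intro conf_measure.intro ergodic_tail_measure_axioms.intro)
  show ?thesis by (rule site_conformal)
qed

end
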